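(* Let $L$ be an infinite set and let $Q$ be either the edgeless cube $Q_L$ or the edged cube $\bar Q_L$. The quotient $\mathrm{UC}_L=\mathrm{uc}_L/{\sim}$, with the operation induced by concatenation, is a group containing $G_L$ (the finite basic sequences modulo $\sim$) as a subgroup. Furthermore, every element of $\mathrm{UC}_L$ has order at most $\operatorname{lcm}\{\text{order of }\pi:\pi\in S_{24}\}$.
   Context: Let $L$ be an infinite set, $-L=\{-r:r\in L\}$ a disjoint copy of $L$, and $0$ a new element; $L^\dagger=-L\cup\{0\}\cup L$ with $-(-r)=r$, $-0=0$. Adjoin $\pm\infty$ with $-(+\infty)=-\infty$ and set $\bar L^\dagger=L^\dagger\cup\{\pm\infty\}$. Points of $U=(\bar L^\dagger)^3$ have coordinates $x,y,z$. The edgeless cube $Q_L$ is the set of points of $U$ with exactly one coordinate in $\{\pm\infty\}$ (cells). The edged cube $\bar Q_L$ is the set of cells $(p,i)$ with $p\in U$, $i\in\{x,y,z\}$, $p_i\in\{\pm\infty\}$ ($i$ marks the face). For $i\in\{x,y,z\}$, $\alpha\in\bar L^\dagger$, the quarter-turn twist $T_{i,\alpha}$ is the permutation of cells fixing every cell whose point $p$ has $p_i\ne\alpha$ and acting on the others by $T_{x,\alpha}(\alpha,y,z)=(\alpha,-z,y)$, $T_{y,\alpha}(x,\alpha,z)=(z,\alpha,-x)$, $T_{z,\alpha}(x,y,\alpha)=(-y,x,\alpha)$ (in $\bar Q_L$ the marked coordinate is carried along by the rotation). Basic twists are $T,T^2,T^3$ for quarter-turn twists $T$. A basic sequence is a sequence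 $\langle\sigma_\eta:\eta<\theta\rangle$ of basic twists of ordinal length $\theta$. A labelling is a map $f$ from cells to $X\cup\{\mathrm{NaC}\}$ for a set $X\not\ni\mathrm{NaC}$; it is legal if it never takes value NaC; a configuration is a labelling with $X$ the six colors red, white, green, orange, yellow, blue. A twist $\sigma$ acts by $(\sigma f)(c)=f(\sigma^{-1}c)$. Applying $\vec\sigma=\langle\sigma_\eta:\eta<\theta\rangle$ to $f_0$ produces $f_{\eta+1}=\sigma_\eta f_\eta$, and for limit $\lambda\le\theta$, $f_\lambda(c)$ is the eventually constant value of $f_\eta(c)$ ($\eta<\lambda$) if it exists and NaC otherwise; the terminal labelling is $\vec\sigma f_0$. $\vec\sigma$ is universally convergent if $\vec\sigma\,\mathrm{id}$ is legal, where $\mathrm{id}$ labels each cell by itself. $\vec\sigma\sim\vec\tau$ means $\vec\sigma f=\vec\tau f$ for every configuration $f$. $\mathrm{uc}_L$ is the set of universally convergent basic sequences with concatenation ($\vec\tau\vec\sigma$ means $\vec\sigma$ followed by $\vec\tau$), and $G_L$ is the set of finite basic sequences modulo $\sim$. *)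

theory Defs
  imports Main "HOL-Algebra.Multiplicative_Group" "HOL-Combinatorics.Permutations"
begin

section \<open>Coordinates: the set L-dagger-bar, with L given as a type 'a\<close>

datatype 'a ext = Neg 'a | Zero | Pos 'a | NInf | PInf

fun eneg :: "'a ext \<Rightarrow> 'a ext" where
  "eneg (Neg r) = Pos r"
| "eneg (Pos r) = Neg r"
| "eneg Zero = Zero"
| "eneg NInf = PInf"
| "eneg PInf = NInf"

definition is_inf :: "'a ext \<Rightarrow> bool" where
  "is_inf a \<longleftrightarrow> a = NInf \<or> a = PInf"

datatype axis = AX | AY | AZ

type_synonym 'a point = "'a ext \<times> 'a ext \<times> 'a ext"

fun coord :: "'a point \<Rightarrow> axis \<Rightarrow> 'a ext" where
  "coord (x, y, z) AX = x"
| "coord (x, y, z) AY = y"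
| "coord (x, y, z) AZ = z"

fun qturn_pt :: "axis \<Rightarrow> 'a ext \<Rightarrow> 'a point \<Rightarrow> 'a point" where
  "qturn_pt AX \<alpha> (x, y, z) = (if x \<noteq> \<alpha> then (x, y, z) else (\<alpha>, eneg z, y))"
| "qturn_pt AY \<alpha> (x, y, z) = (if y \<noteq> \<alpha> then (x, y, z) else (z, \<alpha>, eneg x))"
| "qturn_pt AZ \<alpha> (x, y, z) = (if z \<noteq> \<alpha> then (x, y, z) else (eneg y, x, \<alpha>))"

text \<open>How the rotation about axis i moves a marked coordinate axis j.\<close>
fun carry_axis :: "axis \<Rightarrow> axis \<Rightarrow> axis" where
  "carry_axis AX AX = AX" | "carry_axis AX AY = AZ" | "carry_axis AX AZ = AY"
| "carry_axis AY AX = AZ" | "carry_axis AY AY = AY" | "carry_axis AY AZ = AX"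
| "carry_axis AZ AX = AY" | "carry_axis AZ AY = AX" | "carry_axis AZ AZ = AZ"

text \<open>Quarter-turn twist acting on edged cells (p,j): the marked coordinate is carried along.\<close>
definition qturn_edged :: "axis \<Rightarrow> 'a ext \<Rightarrow> 'a point \<times> axis \<Rightarrow> 'a point \<times> axis" where
  "qturn_edged i \<alpha> c = (case c of (p, j) \<Rightarrow>
     (if coord p i \<noteq> \<alpha> then (p, j) else (qturn_pt i \<alpha> p, carry_axis i j)))"

definition edgeless_cells :: "'a point set" where
  "edgeless_cells = {p. card {i. is_inf (coord p i)} = 1}"

definition edged_cells :: "('a point \<times> axis) set" where
  "edged_cells = {(p, i). is_inf (coord p i)}"

text \<open>A twist (i, alpha, k) stands for (T_{i,alpha})^k; it is basic when k is 1, 2 or 3.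
  The argument qt is the quarter-turn action of the cube under consideration.\<close>
type_synonym 'a twist = "axis \<times> 'a ext \<times> nat"

definition tw_perm :: "(axis \<Rightarrow> 'a ext \<Rightarrow> 'c \<Rightarrow> 'c) \<Rightarrow> 'a twist \<Rightarrow> 'c \<Rightarrow> 'c" where
  "tw_perm qt t = (case t of (i, \<alpha>, k) \<Rightarrow> (qt i \<alpha>) ^^ k)"

definition basic_twist :: "'a twist \<Rightarrow> bool" where
  "basic_twist t \<longleftrightarrow> (case t of (i, \<alpha>, k) \<Rightarrow> k \<in> {1, 2, 3})"

text \<open>A sequence of ordinal length: the ordinal is represented by a well-order r
  (on the index set Field r, a subset of the index type 'i), with entries s.\<close>
type_synonym ('i, 'a) bseq = "'i rel \<times> ('i \<Rightarrow> 'a twist)"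

definition is_bseq :: "('i, 'a) bseq \<Rightarrow> bool" where
  "is_bseq sq \<longleftrightarrow> Well_order (fst sq) \<and> (\<forall>\<eta>\<in>Field (fst sq). basic_twist (snd sq \<eta>))"

text \<open>Labellings: None plays the role of NaC.\<close>
definition act :: "('c \<Rightarrow> 'c) \<Rightarrow> ('c \<Rightarrow> 'x option) \<Rightarrow> 'c \<Rightarrow> 'x option" where
  "act \<pi> f = (\<lambda>c. f (inv_into UNIV \<pi> c))"

text \<open>Stages of a run: Some eta is the stage just before applying the eta-th twist,
  None is the terminal stage theta.\<close>
definition stage_rel :: "'i rel \<Rightarrow> ('i option) rel" where
  "stage_rel r = {(Some a, Some b) | a b. (a, b) \<in> r \<and> a \<noteq> b} \<union> {(Some a, None) | a. a \<in> Field r}"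

definition preds :: "'i rel \<Rightarrow> 'i option \<Rightarrow> 'i set" where
  "preds r \<eta> = {\<xi>. (Some \<xi>, \<eta>) \<in> stage_rel r}"

definition run_step :: "(axis \<Rightarrow> 'a ext \<Rightarrow> 'c \<Rightarrow> 'c) \<Rightarrow> ('i, 'a) bseq \<Rightarrow> ('c \<Rightarrow> 'x option)
    \<Rightarrow> ('i option \<Rightarrow> 'c \<Rightarrow> 'x option) \<Rightarrow> 'i option \<Rightarrow> 'c \<Rightarrow> 'x option" where
  "run_step qt sq f0 F \<eta> =
    (let r = fst sq; s = snd sq; P = preds r \<eta> in
     if P = {} then f0
     else if (\<exists>\<mu>\<in>P. \<forall>\<xi>\<in>P. (\<xi>, \<mu>) \<in> r) then
       (let \<mu> = (THE \<mu>. \<mu> \<in> P \<and> (\<forall>\<xi>\<in>P. (\<xi>, \<mu>) \<in> r)) in act (tw_perm qt (s \<mu>)) (F (Some \<mu>)))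
     else (\<lambda>c. if (\<exists>\<xi>\<in>P. \<forall>\<zeta>\<in>P. (\<xi>, \<zeta>) \<in> r \<longrightarrow> F (Some \<zeta>) c = F (Some \<xi>) c)
               then F (Some (SOME \<xi>. \<xi> \<in> P \<and> (\<forall>\<zeta>\<in>P. (\<xi>, \<zeta>) \<in> r \<longrightarrow> F (Some \<zeta>) c = F (Some \<xi>) c))) c
               else None))"

definition run :: "(axis \<Rightarrow> 'a ext \<Rightarrow> 'c \<Rightarrow> 'c) \<Rightarrow> ('i, 'a) bseq \<Rightarrow> ('c \<Rightarrow> 'x option)
    \<Rightarrow> 'i option \<Rightarrow> 'c \<Rightarrow> 'x option" where
  "run qt sq f0 = wfrec (stage_rel (fst sq)) (run_step qt sq f0)"

definition apply_seq :: "(axis \<Rightarrow> 'a ext \<Rightarrow> 'c \<Rightarrow> 'c) \<Rightarrow> ('i, 'a) bseq \<Rightarrow> ('c \<Rightarrow> 'x option) \<Rightarrow> 'c \<Rightarrow> 'x option" where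
  "apply_seq qt sq f0 = run qt sq f0 None"

definition legal :: "'c set \<Rightarrow> ('c \<Rightarrow> 'x option) \<Rightarrow> bool" where
  "legal cells f \<longleftrightarrow> (\<forall>c\<in>cells. f c \<noteq> None)"

definition uc :: "(axis \<Rightarrow> 'a ext \<Rightarrow> 'c \<Rightarrow> 'c) \<Rightarrow> 'c set \<Rightarrow> ('i, 'a) bseq set" where
  "uc qt cells = {sq. is_bseq sq \<and> legal cells (apply_seq qt sq (\<lambda>c. Some c))}"

datatype color = Red | White | Green | Orange | Yellow | Blue

definition seq_equiv :: "(axis \<Rightarrow> 'a ext \<Rightarrow> 'c \<Rightarrow> 'c) \<Rightarrow> 'c set \<Rightarrow> ('i, 'a) bseq \<Rightarrow> ('i, 'a) bseq \<Rightarrow> bool" where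
  "seq_equiv qt cells sq sq' \<longleftrightarrow>
     (\<forall>f :: 'c \<Rightarrow> color option. \<forall>c\<in>cells. apply_seq qt sq f c = apply_seq qt sq' f c)"

definition sum_rel :: "'i rel \<Rightarrow> 'i rel \<Rightarrow> ('i + 'i) rel" where
  "sum_rel r1 r2 = {(Inl a, Inl b) | a b. (a, b) \<in> r1} \<union> {(Inr a, Inr b) | a b. (a, b) \<in> r2}
                 \<union> {(Inl a, Inr b) | a b. a \<in> Field r1 \<and> b \<in> Field r2}"

text \<open>A fixed injection of 'i + 'i into 'i (exists as 'i is infinite).\<close>
definition emb :: "'i + 'i \<Rightarrow> 'i" where
  "emb = (SOME h. inj h)"

text \<open>seq_then sq1 sq2: first sq1, then sq2 (in the paper's notation: sq2 sq1).\<close>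
definition seq_then :: "('i, 'a) bseq \<Rightarrow> ('i, 'a) bseq \<Rightarrow> ('i, 'a) bseq" where
  "seq_then sq1 sq2 =
    (map_prod emb emb ` sum_rel (fst sq1) (fst sq2),
     \<lambda>\<eta>. case inv_into UNIV emb \<eta> of Inl a \<Rightarrow> snd sq1 a | Inr b \<Rightarrow> snd sq2 b)"

definition empty_seq :: "('i, 'a) bseq" where
  "empty_seq = ({}, \<lambda>_. (AX, Zero, 1))"

definition uc_rel :: "(axis \<Rightarrow> 'a ext \<Rightarrow> 'c \<Rightarrow> 'c) \<Rightarrow> 'c set \<Rightarrow> ('i, 'a) bseq rel" where
  "uc_rel qt cells = {(sq, sq'). sq \<in> uc qt cells \<and> sq' \<in> uc qt cells \<and> seq_equiv qt cells sq sq'}"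

text \<open>Product X * Y = class of (rep Y followed by rep X), i.e. [tau][sigma] = [tau sigma].\<close>
definition UC :: "(axis \<Rightarrow> 'a ext \<Rightarrow> 'c \<Rightarrow> 'c) \<Rightarrow> 'c set \<Rightarrow> ('i, 'a) bseq set monoid" where
  "UC qt cells =
    \<lparr> carrier = uc qt cells // uc_rel qt cells,
      monoid.mult = (\<lambda>X Y. {\<rho> \<in> uc qt cells. \<exists>\<tau>\<in>X. \<exists>\<sigma>\<in>Y. seq_equiv qt cells \<rho> (seq_then \<sigma> \<tau>)}),
      monoid.one = {\<rho> \<in> uc qt cells. seq_equiv qt cells \<rho> empty_seq} \<rparr>"

definition GL_in_UC :: "(axis \<Rightarrow> 'a ext \<Rightarrow> 'c \<Rightarrow> 'c) \<Rightarrow> 'c set \<Rightarrow> ('i, 'a) bseq set set" where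
  "GL_in_UC qt cells = {X \<in> carrier (UC qt cells). \<exists>sq\<in>X. finite (Field (fst sq))}"

definition perm_order :: "(nat \<Rightarrow> nat) \<Rightarrow> nat" where
  "perm_order \<pi> = (LEAST k. 0 < k \<and> \<pi> ^^ k = id)"

definition S24_exponent :: nat where
  "S24_exponent = Lcm {perm_order \<pi> | \<pi>. \<pi> permutes {..<24::nat}}"

definition UC_claim :: "(axis \<Rightarrow> 'a ext \<Rightarrow> 'c \<Rightarrow> 'c) \<Rightarrow> 'c set \<Rightarrow> 'i itself \<Rightarrow> bool" where
  "UC_claim qt cells (_ :: 'i itself) \<longleftrightarrow>
     \<comment> \<open>concatenation of universally convergent sequences is universally convergent\<close>
     (\<forall>\<sigma> \<tau>. \<sigma> \<in> (uc qt cells :: ('i, 'a) bseq set) \<longrightarrow> \<tau> \<in> uc qt cells \<longrightarrow> seq_then \<sigma> \<tau> \<in> uc qt cells)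
     \<comment> \<open>the operation on classes induced by concatenation is well defined\<close>
   \<and> (\<forall>\<sigma> \<sigma>' \<tau> \<tau>'. \<sigma> \<in> (uc qt cells :: ('i, 'a) bseq set) \<longrightarrow> \<sigma>' \<in> uc qt cells \<longrightarrow>
        \<tau> \<in> uc qt cells \<longrightarrow> \<tau>' \<in> uc qt cells \<longrightarrow>
        seq_equiv qt cells \<sigma> \<sigma>' \<longrightarrow> seq_equiv qt cells \<tau> \<tau>' \<longrightarrow>
        seq_equiv qt cells (seq_then \<sigma> \<tau>) (seq_then \<sigma>' \<tau>'))
     \<comment> \<open>UC_L is a group with G_L as a subgroup\<close>
   \<and> group (UC qt cells :: ('i, 'a) bseq set monoid)
   \<and> subgroup (GL_in_UC qt cells) (UC qt cells :: ('i, 'a) bseq set monoid)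
     \<comment> \<open>every element has (finite) order at most lcm of orders in S_24\<close>
   \<and> (\<forall>X \<in> carrier (UC qt cells :: ('i, 'a) bseq set monoid).
        0 < group.ord (UC qt cells) X \<and> group.ord (UC qt cells) X \<le> S24_exponent)"

end

theory Submission
  imports Defs "HOL-Combinatorics.Cycles"
begin

text \<open>A universally convergent sequence acts on configurations as a permutation of the cells.
  By transfinite induction over the stages, the run on a labelling f is f composed with the run
  on the identity labelling, and the latter is a partial injection moving every cell within its
  orbit under the quarter-turns. Convergence makes it total, so each \<sigma> in uc determines an
  injective map seq_perm \<sigma> of the cells with \<sigma> f = f \<circ> seq_perm \<sigma>, and two sequences are
  equivalent iff their maps agree. A concatenation restarts at the junction from the terminal
  labelling of its first part, so it composes the maps and UC is a monoid. Every orbit lies in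
  the orbit of the 24 rotations of the cube, hence seq_perm \<sigma> permutes each orbit, a set of at
  most 24 cells, and its power to the exponent of S_24 is the identity. This bounds the orders
  and yields inverses as powers, which keep finite sequences finite.\<close>

section \<open>Runs\<close>

lemma Well_order_refl: "Well_order r \<Longrightarrow> a \<in> Field r \<Longrightarrow> (a, a) \<in> r"
  by (metis wo_rel.REFL wo_rel_def refl_onD)

lemma Well_order_trans: "Well_order r \<Longrightarrow> (a, b) \<in> r \<Longrightarrow> (b, c) \<in> r \<Longrightarrow> (a, c) \<in> r"
  by (metis wo_rel.TRANS wo_rel_def transD)

lemma Well_order_antisym: "Well_order r \<Longrightarrow> (a, b) \<in> r \<Longrightarrow> (b, a) \<in> r \<Longrightarrow> a = b"
  by (metis wo_rel.ANTISYM wo_rel_def antisymD)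

lemma Well_order_total:
  "Well_order r \<Longrightarrow> a \<in> Field r \<Longrightarrow> b \<in> Field r \<Longrightarrow> (a, b) \<in> r \<or> (b, a) \<in> r"
  by (metis wo_rel.TOTALS wo_rel_def)

lemma preds_Some: "preds r (Some b) = {a. (a, b) \<in> r \<and> a \<noteq> b}"
  unfolding preds_def stage_rel_def by auto

lemma preds_None: "preds r None = Field r"
  unfolding preds_def stage_rel_def by auto

lemma preds_subset_Field: "preds r \<eta> \<subseteq> Field r"
  unfolding preds_def stage_rel_def by (auto intro: FieldI1)

lemma stage_rel_predsI: "\<xi> \<in> preds r \<eta> \<Longrightarrow> (Some \<xi>, \<eta>) \<in> stage_rel r"
  unfolding preds_def by simp

lemma wf_stage_rel:
  assumes "Well_order r"
  shows "wf (stage_rel r)"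
proof -
  have "stage_rel r = map_prod Some Some ` (r - Id) \<union> {(Some a, None) | a. a \<in> Field r}"
    unfolding stage_rel_def by auto
  moreover have "wf (map_prod Some Some ` (r - Id))"
    using assms by (intro wf_map_prod_image) (auto simp: well_order_on_def inj_def)
  moreover have "wf {(Some a, None :: 'a option) | a. a \<in> Field r}"
    by (rule wfI_min) auto
  ultimately show ?thesis
    by (auto intro: wf_Un)
qed

definition is_last :: "'i set \<Rightarrow> 'i rel \<Rightarrow> 'i \<Rightarrow> bool" where
  "is_last P r \<mu> \<longleftrightarrow> \<mu> \<in> P \<and> (\<forall>\<xi>\<in>P. (\<xi>, \<mu>) \<in> r)"

definition stable_from :: "'i set \<Rightarrow> 'i rel \<Rightarrow> ('i option \<Rightarrow> 'c \<Rightarrow> 'x option) \<Rightarrow> 'c \<Rightarrow> 'i \<Rightarrow> bool" where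
  "stable_from P r F c \<xi> \<longleftrightarrow> \<xi> \<in> P \<and> (\<forall>\<zeta>\<in>P. (\<xi>, \<zeta>) \<in> r \<longrightarrow> F (Some \<zeta>) c = F (Some \<xi>) c)"

lemma stable_fromD:
  "stable_from P r F c \<xi> \<Longrightarrow> \<xi> \<in> P"
  "stable_from P r F c \<xi> \<Longrightarrow> \<zeta> \<in> P \<Longrightarrow> (\<xi>, \<zeta>) \<in> r \<Longrightarrow> F (Some \<zeta>) c = F (Some \<xi>) c"
  unfolding stable_from_def by blast+

lemma run_step_first: "preds (fst sq) \<eta> = {} \<Longrightarrow> run_step qt sq f0 F \<eta> = f0"
  unfolding run_step_def by (simp add: Let_def)

lemma run_step_succ:
  assumes "Well_order (fst sq)" "is_last (preds (fst sq) \<eta>) (fst sq) \<mu>"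
  shows "run_step qt sq f0 F \<eta> = act (tw_perm qt (snd sq \<mu>)) (F (Some \<mu>))"
proof -
  have "(THE \<mu>. is_last (preds (fst sq) \<eta>) (fst sq) \<mu>) = \<mu>"
    using assms Well_order_antisym[OF assms(1)] unfolding is_last_def by (intro the_equality) auto
  then show ?thesis
    using assms(2) unfolding run_step_def is_last_def by (auto simp: Let_def)
qed

lemma run_step_limit:
  assumes "preds (fst sq) \<eta> \<noteq> {}" "\<nexists>\<mu>. is_last (preds (fst sq) \<eta>) (fst sq) \<mu>"
  shows "run_step qt sq f0 F \<eta> c =
    (if \<exists>\<xi>. stable_from (preds (fst sq) \<eta>) (fst sq) F c \<xi>
     then F (Some (SOME \<xi>. stable_from (preds (fst sq) \<eta>) (fst sq) F c \<xi>)) c else None)"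
proof -
  let ?P = "preds (fst sq) \<eta>"
  have "stable_from ?P (fst sq) F c =
      (\<lambda>\<xi>. \<xi> \<in> ?P \<and> (\<forall>\<zeta>\<in>?P. (\<xi>, \<zeta>) \<in> fst sq \<longrightarrow> F (Some \<zeta>) c = F (Some \<xi>) c))"
    by (rule ext) (simp add: stable_from_def)
  moreover have "\<not> (\<exists>\<mu>\<in>?P. \<forall>\<xi>\<in>?P. (\<xi>, \<mu>) \<in> fst sq)"
    using assms(2) unfolding is_last_def by blast
  ultimately show ?thesis
    using assms(1) unfolding run_step_def Let_def by (simp only: if_False Bex_def)
qed

lemma stable_from_unique_value:
  assumes "Well_order r" "P \<subseteq> Field r" "stable_from P r F c a" "stable_from P r F c b"
  shows "F (Some a) c = F (Some b) c"
  using assms Well_order_total[OF assms(1), of a b] unfolding stable_from_def by (metis subsetD)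

lemma run_step_limit_stable:
  assumes "Well_order (fst sq)" "preds (fst sq) \<eta> \<noteq> {}"
    "\<nexists>\<mu>. is_last (preds (fst sq) \<eta>) (fst sq) \<mu>"
    "stable_from (preds (fst sq) \<eta>) (fst sq) F c \<xi>"
  shows "run_step qt sq f0 F \<eta> c = F (Some \<xi>) c"
  using run_step_limit[OF assms(2,3)] someI[of "stable_from _ _ F c", OF assms(4)] assms(4)
    stable_from_unique_value[OF assms(1) preds_subset_Field] by metis

lemma run_step_limit_unstable:
  assumes "preds (fst sq) \<eta> \<noteq> {}" "\<nexists>\<mu>. is_last (preds (fst sq) \<eta>) (fst sq) \<mu>"
    "\<nexists>\<xi>. stable_from (preds (fst sq) \<eta>) (fst sq) F c \<xi>"
  shows "run_step qt sq f0 F \<eta> c = None"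
  using assms(3) by (simp add: run_step_limit[OF assms(1,2)])

lemma run_step_limit_SomeD:
  assumes "Well_order (fst sq)" "preds (fst sq) \<eta> \<noteq> {}"
    "\<nexists>\<mu>. is_last (preds (fst sq) \<eta>) (fst sq) \<mu>" "run_step qt sq f0 F \<eta> c = Some v"
  obtains \<xi> where "stable_from (preds (fst sq) \<eta>) (fst sq) F c \<xi>" "F (Some \<xi>) c = Some v"
  using assms run_step_limit_stable[OF assms(1-3)] run_step_limit_unstable[OF assms(2,3)]
  by (metis option.distinct(1))

lemma stage_cases:
  obtains (first) "P = {}" | (succ) \<mu> where "is_last P r \<mu>"
    | (limit) "P \<noteq> {}" "\<nexists>\<mu>. is_last P r \<mu>"
  by blast

lemma run_step_cong:
  assumes "Well_order (fst sq)" "\<And>\<mu>. \<mu> \<in> preds (fst sq) \<eta> \<Longrightarrow> F (Some \<mu>) = F' (Some \<mu>)"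
  shows "run_step qt sq f0 F \<eta> = run_step qt sq f0 F' \<eta>"
proof (cases rule: stage_cases[where P = "preds (fst sq) \<eta>" and r = "fst sq"])
  case first
  then show ?thesis by (simp add: run_step_first)
next
  case (succ \<mu>)
  then show ?thesis using assms by (simp add: run_step_succ is_last_def)
next
  case limit
  let ?P = "preds (fst sq) \<eta>"
  have stable: "stable_from ?P (fst sq) F = stable_from ?P (fst sq) F'"
    using assms(2) unfolding stable_from_def by (intro ext) auto
  have same_value: "F (Some \<xi>) c = F' (Some \<xi>) c" if "stable_from ?P (fst sq) F' c \<xi>" for c \<xi>
    using that assms(2) unfolding stable_from_def by simp
  show ?thesis
  proof (rule ext)
    fix c
    show "run_step qt sq f0 F \<eta> c = run_step qt sq f0 F' \<eta> c"
      using someI_ex[of "stable_from ?P (fst sq) F' c"] same_value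
      by (simp add: run_step_limit[OF limit] stable)
  qed
qed

lemma run_unfold:
  assumes "Well_order (fst sq)"
  shows "run qt sq f \<eta> = run_step qt sq f (run qt sq f) \<eta>"
proof -
  have "run qt sq f \<eta> = run_step qt sq f (cut (run qt sq f) (stage_rel (fst sq)) \<eta>) \<eta>"
    unfolding run_def by (rule wfrec[OF wf_stage_rel[OF assms]])
  also have "\<dots> = run_step qt sq f (run qt sq f) \<eta>"
    by (rule run_step_cong[OF assms]) (simp add: cut_apply stage_rel_predsI)
  finally show ?thesis .
qed

lemma run_first:
  "Well_order (fst sq) \<Longrightarrow> preds (fst sq) \<eta> = {} \<Longrightarrow> run qt sq f \<eta> = f"
  by (simp add: run_unfold run_step_first)

lemma run_succ:
  assumes "Well_order (fst sq)" "is_last (preds (fst sq) \<eta>) (fst sq) \<mu>"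
  shows "run qt sq f \<eta> x = run qt sq f (Some \<mu>) (inv_into UNIV (tw_perm qt (snd sq \<mu>)) x)"
  using run_unfold[OF assms(1), of qt f \<eta>] by (simp add: run_step_succ[OF assms] act_def)

lemma run_limit_stable:
  assumes "Well_order (fst sq)" "preds (fst sq) \<eta> \<noteq> {}"
    "\<nexists>\<mu>. is_last (preds (fst sq) \<eta>) (fst sq) \<mu>"
    "stable_from (preds (fst sq) \<eta>) (fst sq) (run qt sq f) x \<xi>"
  shows "run qt sq f \<eta> x = run qt sq f (Some \<xi>) x"
  using run_unfold[OF assms(1), of qt f \<eta>] run_step_limit_stable[OF assms] by simp

lemma run_limit_SomeD:
  assumes "Well_order (fst sq)" "preds (fst sq) \<eta> \<noteq> {}"
    "\<nexists>\<mu>. is_last (preds (fst sq) \<eta>) (fst sq) \<mu>" "run qt sq f \<eta> x = Some v"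
  obtains \<xi> where "stable_from (preds (fst sq) \<eta>) (fst sq) (run qt sq f) x \<xi>"
    "run qt sq f (Some \<xi>) x = Some v"
  using run_step_limit_SomeD[OF assms(1-3)] assms(4) run_unfold[OF assms(1), of qt f \<eta>] by metis

locale cofinal_embedding =
  fixes r :: "'i rel" and P :: "'i set" and r' :: "'j rel" and P' :: "'j set" and h :: "'j \<Rightarrow> 'i"
  assumes Well_order: "Well_order r"
    and maps_into: "h ` P' \<subseteq> P"
    and order_iff: "\<And>\<xi> \<zeta>. \<xi> \<in> P' \<Longrightarrow> \<zeta> \<in> P' \<Longrightarrow> (h \<xi>, h \<zeta>) \<in> r \<longleftrightarrow> (\<xi>, \<zeta>) \<in> r'"
    and cofinal: "\<And>\<xi>. \<xi> \<in> P \<Longrightarrow> \<exists>\<mu>\<in>P'. (\<xi>, h \<mu>) \<in> r"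
    and upward_closed: "\<And>\<mu> \<zeta>. \<mu> \<in> P' \<Longrightarrow> \<zeta> \<in> P \<Longrightarrow> (h \<mu>, \<zeta>) \<in> r \<Longrightarrow> \<zeta> \<in> h ` P'"
begin

lemma is_last_image_iff:
  assumes "\<mu> \<in> P'"
  shows "is_last P r (h \<mu>) \<longleftrightarrow> is_last P' r' \<mu>"
proof
  assume "is_last P r (h \<mu>)"
  then show "is_last P' r' \<mu>" using assms maps_into order_iff unfolding is_last_def by blast
next
  assume last: "is_last P' r' \<mu>"
  have "(\<xi>, h \<mu>) \<in> r" if \<xi>: "\<xi> \<in> P" for \<xi>
  proof -
    obtain \<nu> where \<nu>: "\<nu> \<in> P'" "(\<xi>, h \<nu>) \<in> r" using cofinal[OF \<xi>] by blast
    moreover have "(h \<nu>, h \<mu>) \<in> r" using last \<nu>(1) assms order_iff unfolding is_last_def by blast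
    ultimately show ?thesis using Well_order_trans[OF Well_order] by blast
  qed
  then show "is_last P r (h \<mu>)" using assms maps_into unfolding is_last_def by blast
qed

lemma ex_last_iff: "(\<exists>\<mu>. is_last P r \<mu>) \<longleftrightarrow> (\<exists>\<mu>. is_last P' r' \<mu>)"
proof
  assume "\<exists>\<mu>. is_last P r \<mu>"
  then obtain \<mu> where \<mu>: "is_last P r \<mu>" by blast
  then obtain \<nu> where \<nu>: "\<nu> \<in> P'" "(\<mu>, h \<nu>) \<in> r" using cofinal unfolding is_last_def by blast
  then have "h \<nu> = \<mu>"
    using \<mu> maps_into Well_order_antisym[OF Well_order] unfolding is_last_def by blast
  then show "\<exists>\<mu>. is_last P' r' \<mu>" using \<mu> \<nu>(1) is_last_image_iff by blast
next
  assume "\<exists>\<mu>. is_last P' r' \<mu>"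
  then show "\<exists>\<mu>. is_last P r \<mu>" using is_last_image_iff unfolding is_last_def by blast
qed

context
  fixes F :: "'i option \<Rightarrow> 'c \<Rightarrow> 'x option" and F' :: "'j option \<Rightarrow> 'c \<Rightarrow> 'x option"
  assumes same_values: "\<And>\<mu>. \<mu> \<in> P' \<Longrightarrow> F (Some (h \<mu>)) = F' (Some \<mu>)"
begin

lemma stable_from_image:
  assumes "stable_from P' r' F' c \<xi>"
  shows "stable_from P r F c (h \<xi>)"
  unfolding stable_from_def
proof (intro conjI ballI impI)
  have \<xi>: "\<xi> \<in> P'" using assms unfolding stable_from_def by blast
  then show "h \<xi> \<in> P" using maps_into by blast
  fix \<zeta> assume \<zeta>: "\<zeta> \<in> P" "(h \<xi>, \<zeta>) \<in> r"
  then obtain \<mu> where \<mu>: "\<mu> \<in> P'" "\<zeta> = h \<mu>" using upward_closed[OF \<xi>] by blast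
  then have "(\<xi>, \<mu>) \<in> r'" using order_iff \<xi> \<zeta>(2) by blast
  then show "F (Some \<zeta>) c = F (Some (h \<xi>)) c"
    using assms \<xi> \<mu> same_values unfolding stable_from_def by simp
qed

lemma stable_from_preimage:
  assumes "stable_from P r F c \<xi>"
  obtains \<mu> where "stable_from P' r' F' c \<mu>"
proof -
  have \<xi>: "\<xi> \<in> P" using assms unfolding stable_from_def by blast
  obtain \<mu> where \<mu>: "\<mu> \<in> P'" "(\<xi>, h \<mu>) \<in> r" using cofinal[OF \<xi>] by blast
  have "F' (Some \<zeta>) c = F' (Some \<mu>) c" if \<zeta>: "\<zeta> \<in> P'" "(\<mu>, \<zeta>) \<in> r'" for \<zeta>
  proof -
    have "(\<xi>, h \<zeta>) \<in> r" using \<mu> \<zeta> order_iff Well_order_trans[OF Well_order] by blast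
    then have "F (Some (h \<zeta>)) c = F (Some \<xi>) c" "F (Some (h \<mu>)) c = F (Some \<xi>) c"
      using assms \<mu> \<zeta> maps_into unfolding stable_from_def by blast+
    then show ?thesis using same_values \<mu>(1) \<zeta>(1) by simp
  qed
  then show ?thesis using that \<mu>(1) unfolding stable_from_def by blast
qed

end

end

text \<open>A run step only depends on a cofinal final segment of the earlier stages.\<close>

lemma run_step_transport:
  assumes emb: "cofinal_embedding (fst sq) (preds (fst sq) \<eta>) (fst sq') (preds (fst sq') \<eta>') h"
    and wo': "Well_order (fst sq')" and ne: "preds (fst sq') \<eta>' \<noteq> {}"
    and twists: "\<And>\<mu>. \<mu> \<in> preds (fst sq') \<eta>' \<Longrightarrow> snd sq (h \<mu>) = snd sq' \<mu>"
    and same_values: "\<And>\<mu>. \<mu> \<in> preds (fst sq') \<eta>' \<Longrightarrow> F (Some (h \<mu>)) = F' (Some \<mu>)"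
  shows "run_step qt sq f0 F \<eta> = run_step qt sq' f0' F' \<eta>'"
proof -
  interpret cofinal_embedding "fst sq" "preds (fst sq) \<eta>" "fst sq'" "preds (fst sq') \<eta>'" h
    by (rule emb)
  show ?thesis
  proof (cases "\<exists>\<mu>. is_last (preds (fst sq') \<eta>') (fst sq') \<mu>")
    case True
    then obtain \<mu> where \<mu>: "is_last (preds (fst sq') \<eta>') (fst sq') \<mu>" by blast
    then have \<mu>P: "\<mu> \<in> preds (fst sq') \<eta>'" unfolding is_last_def by blast
    have "run_step qt sq f0 F \<eta> = act (tw_perm qt (snd sq (h \<mu>))) (F (Some (h \<mu>)))"
      by (rule run_step_succ[OF Well_order is_last_image_iff[THEN iffD2, OF \<mu>P \<mu>]])
    also have "\<dots> = act (tw_perm qt (snd sq' \<mu>)) (F' (Some \<mu>))"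
      using twists[OF \<mu>P] same_values[OF \<mu>P] by simp
    also have "\<dots> = run_step qt sq' f0' F' \<eta>'"
      by (rule run_step_succ[OF wo' \<mu>, symmetric])
    finally show ?thesis .
  next
    case False
    have ne_P: "preds (fst sq) \<eta> \<noteq> {}" using ne maps_into by blast
    have no_last: "\<nexists>\<mu>. is_last (preds (fst sq) \<eta>) (fst sq) \<mu>" using False ex_last_iff by blast
    show ?thesis
    proof (rule ext)
      fix c
      show "run_step qt sq f0 F \<eta> c = run_step qt sq' f0' F' \<eta>' c"
      proof (cases "\<exists>\<mu>. stable_from (preds (fst sq') \<eta>') (fst sq') F' c \<mu>")
        case True
        then obtain \<mu> where \<mu>: "stable_from (preds (fst sq') \<eta>') (fst sq') F' c \<mu>" by blast
        then have "\<mu> \<in> preds (fst sq') \<eta>'" unfolding stable_from_def by blast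
        then show ?thesis
          using run_step_limit_stable[OF wo' ne False \<mu>] same_values
            run_step_limit_stable[OF Well_order ne_P no_last stable_from_image[OF same_values \<mu>]]
          by simp
      next
        case unstable: False
        then have "\<nexists>\<xi>. stable_from (preds (fst sq) \<eta>) (fst sq) F c \<xi>"
          using stable_from_preimage[where F = F and F' = F', OF same_values] by blast
        then show ?thesis
          using run_step_limit_unstable[OF ne_P no_last]
            run_step_limit_unstable[OF ne False unstable] by simp
      qed
    qed
  qed
qed

section \<open>Cube actions\<close>

inductive reach :: "(axis \<Rightarrow> 'a ext \<Rightarrow> 'c \<Rightarrow> 'c) \<Rightarrow> 'c \<Rightarrow> 'c \<Rightarrow> bool" for qt where
  reach_refl: "reach qt c c"
| reach_step: "reach qt c d \<Longrightarrow> reach qt c (qt i \<alpha> d)"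

lemma reach_funpow: "reach qt c d \<Longrightarrow> reach qt c ((qt i \<alpha> ^^ k) d)"
  by (induction k) (auto intro: reach_step)

lemma reach_tw_perm: "reach qt c d \<Longrightarrow> reach qt c (tw_perm qt t d)"
  unfolding tw_perm_def by (cases t) (auto intro: reach_funpow)

lemma reach_trans: "reach qt d e \<Longrightarrow> reach qt c d \<Longrightarrow> reach qt c e"
  by (induction rule: reach.induct) (auto intro: reach_step)

locale cube_action =
  fixes qt :: "axis \<Rightarrow> 'a ext \<Rightarrow> 'c \<Rightarrow> 'c" and cells :: "'c set"
  assumes qt_funpow_4: "(qt i \<alpha> ^^ 4) x = x"
    and qt_cells: "x \<in> cells \<Longrightarrow> qt i \<alpha> x \<in> cells"
    and finite_orbit: "finite {d. reach qt c d}"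
    and card_orbit: "card {d. reach qt c d} \<le> 24"
begin

lemma qt_funpow_3_inverse: "(qt i \<alpha> ^^ 3) (qt i \<alpha> x) = x" "qt i \<alpha> ((qt i \<alpha> ^^ 3) x) = x"
  using qt_funpow_4[of i \<alpha> x]
  by (simp_all add: numeral_eq_Suc funpow_Suc_right del: funpow.simps)

lemma bij_tw_perm: "bij (tw_perm qt t)"
proof -
  have "bij (qt i \<alpha>)" for i \<alpha>
    by (rule o_bij[of "qt i \<alpha> ^^ 3"]) (simp_all add: fun_eq_iff qt_funpow_3_inverse)
  then show ?thesis unfolding tw_perm_def by (cases t) (simp add: bij_fn)
qed

lemma reach_sym: "reach qt c d \<Longrightarrow> reach qt d c"
proof (induction rule: reach.induct)
  case (reach_refl c)
  then show ?case by (rule reach.reach_refl)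
next
  case (reach_step c d i \<alpha>)
  have "reach qt (qt i \<alpha> d) ((qt i \<alpha> ^^ 3) (qt i \<alpha> d))"
    by (rule reach_funpow[OF reach.reach_refl])
  then have "reach qt (qt i \<alpha> d) d" by (simp only: qt_funpow_3_inverse)
  then show ?case using reach_trans reach_step.IH by metis
qed

lemma reach_cells: "reach qt c d \<Longrightarrow> c \<in> cells \<Longrightarrow> d \<in> cells"
  by (induction rule: reach.induct) (auto intro: qt_cells)

lemma run_Some_source:
  assumes wo: "Well_order (fst sq)"
  shows "run qt sq Some \<eta> x = Some v \<Longrightarrow> reach qt v x \<and> run qt sq f \<eta> x = f v"
proof (induction \<eta> arbitrary: x v rule: wf_induct_rule[OF wf_stage_rel[OF wo], case_names less])
  case (less \<eta>)
  let ?P = "preds (fst sq) \<eta>"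
  note IH = less.IH[OF stage_rel_predsI]
  show ?case
  proof (cases rule: stage_cases[where P = ?P and r = "fst sq"])
    case first
    then show ?thesis using less.prems by (simp add: run_first[OF wo] reach_refl)
  next
    case (succ \<mu>)
    let ?\<pi> = "tw_perm qt (snd sq \<mu>)"
    let ?y = "inv_into UNIV ?\<pi> x"
    have \<mu>: "\<mu> \<in> ?P" using succ unfolding is_last_def by blast
    have "run qt sq Some (Some \<mu>) ?y = Some v"
      using less.prems by (simp add: run_succ[OF wo succ])
    then have "reach qt v ?y \<and> run qt sq f (Some \<mu>) ?y = f v" by (rule IH[OF \<mu>])
    moreover have "?\<pi> ?y = x" by (simp add: bij_tw_perm bij_is_surj surj_f_inv_f)
    ultimately show ?thesis
      using reach_tw_perm[of qt v ?y "snd sq \<mu>"] by (simp add: run_succ[OF wo succ])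
  next
    case limit
    obtain \<xi> where \<xi>: "stable_from ?P (fst sq) (run qt sq Some) x \<xi>"
        "run qt sq Some (Some \<xi>) x = Some v"
      using run_limit_SomeD[OF wo limit less.prems] by blast
    have \<xi>P: "\<xi> \<in> ?P" using \<xi>(1) unfolding stable_from_def by blast
    have "stable_from ?P (fst sq) (run qt sq f) x \<xi>"
      unfolding stable_from_def
    proof (intro conjI ballI impI)
      fix \<zeta> assume \<zeta>: "\<zeta> \<in> ?P" "(\<xi>, \<zeta>) \<in> fst sq"
      then have "run qt sq Some (Some \<zeta>) x = Some v" using \<xi> unfolding stable_from_def by simp
      then show "run qt sq f (Some \<zeta>) x = run qt sq f (Some \<xi>) x"
        using IH[OF \<zeta>(1)] IH[OF \<xi>P \<xi>(2)] by (metis (no_types))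
    qed (rule \<xi>P)
    then show ?thesis using run_limit_stable[OF wo limit] IH[OF \<xi>P \<xi>(2)] by (metis (no_types))
  qed
qed

lemma run_Some_inj:
  assumes wo: "Well_order (fst sq)"
  shows "run qt sq Some \<eta> x = Some v \<Longrightarrow> run qt sq Some \<eta> y = Some v \<Longrightarrow> x = y"
proof (induction \<eta> arbitrary: x y v rule: wf_induct_rule[OF wf_stage_rel[OF wo], case_names less])
  case (less \<eta>)
  let ?P = "preds (fst sq) \<eta>"
  note IH = less.IH[OF stage_rel_predsI]
  show ?case
  proof (cases rule: stage_cases[where P = ?P and r = "fst sq"])
    case first
    then show ?thesis using less.prems by (simp add: run_first[OF wo])
  next
    case (succ \<mu>)
    let ?\<pi> = "tw_perm qt (snd sq \<mu>)"
    have \<mu>: "\<mu> \<in> ?P" using succ unfolding is_last_def by blast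
    have "run qt sq Some (Some \<mu>) (inv_into UNIV ?\<pi> x) = Some v"
      "run qt sq Some (Some \<mu>) (inv_into UNIV ?\<pi> y) = Some v"
      using less.prems by (simp_all add: run_succ[OF wo succ])
    then have "inv_into UNIV ?\<pi> x = inv_into UNIV ?\<pi> y" by (rule IH[OF \<mu>])
    then show ?thesis
      by (rule inv_into_injective) (simp_all add: bij_tw_perm bij_is_surj)
  next
    case limit
    obtain \<xi> where \<xi>: "stable_from ?P (fst sq) (run qt sq Some) x \<xi>"
        "run qt sq Some (Some \<xi>) x = Some v"
      using run_limit_SomeD[OF wo limit less.prems(1)] by blast
    obtain \<xi>' where \<xi>': "stable_from ?P (fst sq) (run qt sq Some) y \<xi>'"
        "run qt sq Some (Some \<xi>') y = Some v"
      using run_limit_SomeD[OF wo limit less.prems(2)] by blast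
    have P: "\<xi> \<in> ?P" "\<xi>' \<in> ?P"
      by (rule stable_fromD(1)[OF \<xi>(1)], rule stable_fromD(1)[OF \<xi>'(1)])
    then have "\<xi> \<in> Field (fst sq)" "\<xi>' \<in> Field (fst sq)"
      by (auto dest: subsetD[OF preds_subset_Field])
    then consider "(\<xi>, \<xi>') \<in> fst sq" | "(\<xi>', \<xi>) \<in> fst sq" using Well_order_total[OF wo] by blast
    then show ?thesis
    proof cases
      case 1
      then have "run qt sq Some (Some \<xi>') x = Some v"
        using stable_fromD(2)[OF \<xi>(1) P(2)] \<xi>(2) by simp
      then show ?thesis using IH[OF P(2) _ \<xi>'(2)] by blast
    next
      case 2
      then have "run qt sq Some (Some \<xi>) y = Some v"
        using stable_fromD(2)[OF \<xi>'(1) P(1)] \<xi>'(2) by simp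
      then show ?thesis using IH[OF P(1) \<xi>(2)] by blast
    qed
  qed
qed

end

section \<open>Concatenation\<close>

lemma sum_rel_simps [simp]:
  "(Inl a, Inl b) \<in> sum_rel r1 r2 \<longleftrightarrow> (a, b) \<in> r1"
  "(Inr a, Inr b) \<in> sum_rel r1 r2 \<longleftrightarrow> (a, b) \<in> r2"
  "(Inl a, Inr b) \<in> sum_rel r1 r2 \<longleftrightarrow> a \<in> Field r1 \<and> b \<in> Field r2"
  "(Inr a, Inl b) \<notin> sum_rel r1 r2"
  unfolding sum_rel_def by auto

lemma Field_map_prod_image: "Field (map_prod h h ` R) = h ` Field R"
  unfolding Field_def by force

lemma map_prod_image_iff: "inj h \<Longrightarrow> (h x, h y) \<in> map_prod h h ` R \<longleftrightarrow> (x, y) \<in> R"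
  by (auto simp: inj_eq)

lemma Field_sum_rel: "Field (sum_rel r1 r2) = Inl ` Field r1 \<union> Inr ` Field r2"
proof
  show "Field (sum_rel r1 r2) \<subseteq> Inl ` Field r1 \<union> Inr ` Field r2"
    unfolding sum_rel_def Field_def by auto
  have "Inl a \<in> Field (sum_rel r1 r2)" if "a \<in> Field r1" for a
    using that unfolding Field_iff by (metis sum_rel_simps(1))
  moreover have "Inr b \<in> Field (sum_rel r1 r2)" if "b \<in> Field r2" for b
    using that unfolding Field_iff by (metis sum_rel_simps(2))
  ultimately show "Inl ` Field r1 \<union> Inr ` Field r2 \<subseteq> Field (sum_rel r1 r2)" by blast
qed

lemma Linear_order_sum_rel:
  assumes wo1: "Well_order r1" and wo2: "Well_order r2"
  shows "Linear_order (sum_rel r1 r2)"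
  unfolding linear_order_on_def partial_order_on_def preorder_on_def
proof (intro conjI)
  let ?S = "sum_rel r1 r2"
  show "refl_on (Field ?S) ?S"
    using Well_order_refl[OF wo1] Well_order_refl[OF wo2] by (auto simp: refl_on_def Field_sum_rel)
  show "trans ?S"
  proof (rule transI)
    fix x y z assume "(x, y) \<in> ?S" "(y, z) \<in> ?S"
    then show "(x, z) \<in> ?S"
      by (cases x; cases y; cases z)
        (auto intro: Well_order_trans[OF wo1] Well_order_trans[OF wo2] FieldI1 FieldI2)
  qed
  show "antisym ?S"
  proof (rule antisymI)
    fix x y assume "(x, y) \<in> ?S" "(y, x) \<in> ?S"
    then show "x = y"
      by (cases x; cases y) (auto intro: Well_order_antisym[OF wo1] Well_order_antisym[OF wo2])
  qed
  show "total_on (Field ?S) ?S"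
    unfolding total_on_def Field_sum_rel
    by (auto dest: Well_order_total[OF wo1] Well_order_total[OF wo2])
  show "?S \<subseteq> Field ?S \<times> Field ?S" by (auto intro: FieldI1 FieldI2)
qed

lemma Well_order_sum_rel:
  assumes wo1: "Well_order r1" and wo2: "Well_order r2"
  shows "Well_order (sum_rel r1 r2)"
proof -
  let ?S = "sum_rel r1 r2"
  have "\<exists>a\<in>A. \<forall>a'\<in>A. (a, a') \<in> ?S" if A: "A \<subseteq> Field ?S" "A \<noteq> {}" for A
  proof (cases "Inl -` A = {}")
    case True
    have "Inr -` A \<noteq> {}"
    proof -
      obtain x where "x \<in> A" using A(2) by blast
      with True show ?thesis by (cases x) auto
    qed
    moreover have "Inr -` A \<subseteq> Field r2" using A unfolding Field_sum_rel by auto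
    ultimately obtain b where b: "Inr b \<in> A" "\<forall>b'\<in>Inr -` A. (b, b') \<in> r2"
      using wo2 Linear_order_Well_order_iff[of r2] unfolding well_order_on_def by blast
    have "(Inr b, a') \<in> ?S" if "a' \<in> A" for a'
      using that True b(2) by (cases a') auto
    then show ?thesis using b(1) by blast
  next
    case False
    moreover have "Inl -` A \<subseteq> Field r1" using A unfolding Field_sum_rel by auto
    ultimately obtain a where a: "Inl a \<in> A" "\<forall>a'\<in>Inl -` A. (a, a') \<in> r1"
      using wo1 Linear_order_Well_order_iff[of r1] unfolding well_order_on_def by blast
    have "(Inl a, a') \<in> ?S" if "a' \<in> A" for a'
      using that a A(1) unfolding Field_sum_rel by (cases a') auto
    then show ?thesis using a(1) by blast
  qed
  then show ?thesis using Linear_order_Well_order_iff[OF Linear_order_sum_rel[OF assms]] by blast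
qed

lemma preds_sum_rel_Inl: "preds (sum_rel r1 r2) (Some (Inl a)) = Inl ` preds r1 (Some a)"
proof (rule Set.set_eqI, rule iffI)
  fix w assume "w \<in> preds (sum_rel r1 r2) (Some (Inl a))"
  then show "w \<in> Inl ` preds r1 (Some a)" by (cases w) (auto simp: preds_Some)
qed (auto simp: preds_Some)

lemma preds_sum_rel_right:
  assumes "set_option \<eta> \<subseteq> Field r2"
  shows "preds (sum_rel r1 r2) (map_option Inr \<eta>) = Inl ` Field r1 \<union> Inr ` preds r2 \<eta>"
proof (rule Set.set_eqI, rule iffI)
  fix w assume "w \<in> preds (sum_rel r1 r2) (map_option Inr \<eta>)"
  then show "w \<in> Inl ` Field r1 \<union> Inr ` preds r2 \<eta>"
    by (cases w; cases \<eta>) (auto simp: preds_Some preds_None Field_sum_rel)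
qed (use assms in \<open>cases \<eta>; auto simp: preds_Some preds_None Field_sum_rel\<close>)

lemma preds_map_prod_image:
  assumes "inj h"
  shows "preds (map_prod h h ` R) (map_option h \<eta>) = h ` preds R \<eta>"
  using assms
  by (cases \<eta>) (auto simp: preds_Some preds_None Field_map_prod_image map_prod_image_iff inj_eq)

lemma cofinal_embedding_onto:
  assumes "Well_order r" "P \<subseteq> Field r" "P = h ` P'"
    "\<And>\<xi> \<zeta>. \<xi> \<in> P' \<Longrightarrow> \<zeta> \<in> P' \<Longrightarrow> (h \<xi>, h \<zeta>) \<in> r \<longleftrightarrow> (\<xi>, \<zeta>) \<in> r'"
  shows "cofinal_embedding r P r' P' h"
proof
  show "h ` P' \<subseteq> P" using assms(3) by simp
  show "\<exists>\<mu>\<in>P'. (\<xi>, h \<mu>) \<in> r" if "\<xi> \<in> P" for \<xi>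
    using that assms(2,3) Well_order_refl[OF assms(1)] by blast
  show "\<zeta> \<in> h ` P'" if "\<zeta> \<in> P" for \<zeta> using that assms(3) by simp
qed (use assms in simp_all)

context
  assumes inj_emb: "inj (emb :: 'i + 'i \<Rightarrow> 'i)"
begin

lemma fst_seq_then:
  "fst (seq_then \<sigma> \<tau>) = map_prod emb emb ` sum_rel (fst \<sigma>) (fst (\<tau> :: ('i, 'a) bseq))"
  unfolding seq_then_def by simp

lemma snd_seq_then [simp]:
  "snd (seq_then \<sigma> \<tau>) (emb (Inl a)) = snd \<sigma> a"
  "snd (seq_then \<sigma> \<tau>) (emb (Inr b)) = snd (\<tau> :: ('i, 'a) bseq) b"
  unfolding seq_then_def using inj_emb by simp_all

lemma seq_then_rel_iff:
  "(emb u, emb w) \<in> fst (seq_then \<sigma> \<tau>) \<longleftrightarrow> (u, w) \<in> sum_rel (fst \<sigma>) (fst (\<tau> :: ('i, 'a) bseq))"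
  unfolding fst_seq_then using inj_emb by (rule map_prod_image_iff)

lemma Field_seq_then:
  "Field (fst (seq_then \<sigma> \<tau>)) = emb ` Field (sum_rel (fst \<sigma>) (fst (\<tau> :: ('i, 'a) bseq)))"
  unfolding fst_seq_then by (rule Field_map_prod_image)

lemma preds_seq_then:
  "preds (fst (seq_then \<sigma> \<tau>)) (map_option emb \<eta>) =
    emb ` preds (sum_rel (fst \<sigma>) (fst (\<tau> :: ('i, 'a) bseq))) \<eta>"
  unfolding fst_seq_then by (rule preds_map_prod_image[OF inj_emb])

lemma Well_order_seq_then:
  assumes "Well_order (fst \<sigma>)" "Well_order (fst (\<tau> :: ('i, 'a) bseq))"
  shows "Well_order (fst (seq_then \<sigma> \<tau>))"
proof -
  have "fst (seq_then \<sigma> \<tau>) = dir_image (sum_rel (fst \<sigma>) (fst \<tau>)) emb"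
    unfolding fst_seq_then dir_image_def by auto
  moreover have "inj_on emb (Field (sum_rel (fst \<sigma>) (fst \<tau>)))"
    using inj_emb by (rule inj_on_subset) simp
  ultimately show ?thesis using Well_order_dir_image[OF Well_order_sum_rel[OF assms]] by simp
qed

lemma is_bseq_seq_then:
  assumes "is_bseq \<sigma>" "is_bseq (\<tau> :: ('i, 'a) bseq)"
  shows "is_bseq (seq_then \<sigma> \<tau>)"
  unfolding is_bseq_def
proof
  show "Well_order (fst (seq_then \<sigma> \<tau>))"
    using assms unfolding is_bseq_def by (blast intro: Well_order_seq_then)
  show "\<forall>\<eta>\<in>Field (fst (seq_then \<sigma> \<tau>)). basic_twist (snd (seq_then \<sigma> \<tau>) \<eta>)"
    using assms unfolding is_bseq_def by (auto simp: Field_seq_then Field_sum_rel)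
qed

lemma finite_Field_seq_then:
  "finite (Field (fst \<sigma>)) \<Longrightarrow> finite (Field (fst (\<tau> :: ('i, 'a) bseq))) \<Longrightarrow>
    finite (Field (fst (seq_then \<sigma> \<tau>)))"
  by (simp add: Field_seq_then Field_sum_rel)

lemma run_seq_then_left:
  assumes wo1: "Well_order (fst \<sigma>)" and wo2: "Well_order (fst (\<tau> :: ('i, 'a) bseq))"
  shows "run qt (seq_then \<sigma> \<tau>) f (Some (emb (Inl a))) = run qt \<sigma> f (Some a)"
proof (induction a rule: wf_induct_rule[OF wo_rel.WF[unfolded wo_rel_def, OF wo1], case_names less])
  case (less a)
  let ?R = "fst (seq_then \<sigma> \<tau>)" and ?P' = "preds (fst \<sigma>) (Some a)"
  have wo: "Well_order ?R" by (rule Well_order_seq_then[OF wo1 wo2])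
  have P: "preds ?R (Some (emb (Inl a))) = (emb \<circ> Inl) ` ?P'"
    using preds_seq_then[of \<sigma> \<tau> "Some (Inl a)"] by (simp add: preds_sum_rel_Inl image_comp)
  show ?case
  proof (cases "?P' = {}")
    case True
    then show ?thesis using P by (simp add: run_first[OF wo] run_first[OF wo1])
  next
    case False
    have "cofinal_embedding ?R (preds ?R (Some (emb (Inl a)))) (fst \<sigma>) ?P' (emb \<circ> Inl)"
      by (rule cofinal_embedding_onto[OF wo preds_subset_Field P]) (simp add: seq_then_rel_iff)
    then have "run_step qt (seq_then \<sigma> \<tau>) f (run qt (seq_then \<sigma> \<tau>) f) (Some (emb (Inl a))) =
        run_step qt \<sigma> f (run qt \<sigma> f) (Some a)"
      by (rule run_step_transport[OF _ wo1 False]) (auto simp: preds_Some less.IH)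
    then show ?thesis by (simp add: run_unfold[OF wo, symmetric] run_unfold[OF wo1, symmetric])
  qed
qed

lemma run_step_seq_then_junction:
  assumes wo1: "Well_order (fst \<sigma>)" and wo2: "Well_order (fst (\<tau> :: ('i, 'a) bseq))"
    and P: "preds (fst (seq_then \<sigma> \<tau>)) \<eta> = (emb \<circ> Inl) ` Field (fst \<sigma>)"
  shows "run_step qt (seq_then \<sigma> \<tau>) f (run qt (seq_then \<sigma> \<tau>) f) \<eta> = run qt \<sigma> f None"
proof (cases "Field (fst \<sigma>) = {}")
  case True
  then show ?thesis using P by (simp add: run_step_first run_first[OF wo1] preds_None)
next
  case False
  let ?R = "fst (seq_then \<sigma> \<tau>)"
  have wo: "Well_order ?R" by (rule Well_order_seq_then[OF wo1 wo2])
  have "cofinal_embedding ?R (preds ?R \<eta>) (fst \<sigma>) (preds (fst \<sigma>) None) (emb \<circ> Inl)"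
    by (rule cofinal_embedding_onto[OF wo preds_subset_Field])
      (simp_all add: P preds_None seq_then_rel_iff)
  then have "run_step qt (seq_then \<sigma> \<tau>) f (run qt (seq_then \<sigma> \<tau>) f) \<eta> =
      run_step qt \<sigma> f (run qt \<sigma> f) None"
    by (rule run_step_transport[OF _ wo1])
      (simp_all add: False preds_None run_seq_then_left[OF wo1 wo2])
  then show ?thesis by (simp add: run_unfold[OF wo1, symmetric])
qed

lemma cofinal_embedding_seq_then_right:
  assumes wo1: "Well_order (fst \<sigma>)" and wo2: "Well_order (fst (\<tau> :: ('i, 'a) bseq))"
    and P: "preds (fst (seq_then \<sigma> \<tau>)) \<eta>' = (emb \<circ> Inl) ` Field (fst \<sigma>) \<union> (emb \<circ> Inr) ` P'"
    and P': "P' \<subseteq> Field (fst \<tau>)" "P' \<noteq> {}"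
  shows "cofinal_embedding (fst (seq_then \<sigma> \<tau>)) (preds (fst (seq_then \<sigma> \<tau>)) \<eta>')
    (fst \<tau>) P' (emb \<circ> Inr)"
proof
  show "Well_order (fst (seq_then \<sigma> \<tau>))" by (rule Well_order_seq_then[OF wo1 wo2])
  show "(emb \<circ> Inr) ` P' \<subseteq> preds (fst (seq_then \<sigma> \<tau>)) \<eta>'" using P by blast
  show "((emb \<circ> Inr) \<xi>, (emb \<circ> Inr) \<zeta>) \<in> fst (seq_then \<sigma> \<tau>) \<longleftrightarrow> (\<xi>, \<zeta>) \<in> fst \<tau>" for \<xi> \<zeta>
    by (simp add: seq_then_rel_iff)
  show "\<exists>\<mu>\<in>P'. (\<xi>, (emb \<circ> Inr) \<mu>) \<in> fst (seq_then \<sigma> \<tau>)"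
    if "\<xi> \<in> preds (fst (seq_then \<sigma> \<tau>)) \<eta>'" for \<xi>
  proof -
    obtain \<mu>0 where \<mu>0: "\<mu>0 \<in> P'" using P'(2) by blast
    from that consider a where "\<xi> = emb (Inl a)" "a \<in> Field (fst \<sigma>)"
      | \<mu> where "\<xi> = emb (Inr \<mu>)" "\<mu> \<in> P'"
      unfolding P by auto
    then show ?thesis
    proof cases
      case 1
      then show ?thesis using \<mu>0 P' by (auto simp: seq_then_rel_iff)
    next
      case 2
      then show ?thesis using P' Well_order_refl[OF wo2] by (auto simp: seq_then_rel_iff)
    qed
  qed
  show "\<zeta> \<in> (emb \<circ> Inr) ` P'"
    if "\<mu> \<in> P'" "\<zeta> \<in> preds (fst (seq_then \<sigma> \<tau>)) \<eta>'" "((emb \<circ> Inr) \<mu>, \<zeta>) \<in> fst (seq_then \<sigma> \<tau>)"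
    for \<mu> \<zeta>
    using that unfolding P by (auto simp: seq_then_rel_iff)
qed

lemma run_seq_then_right:
  assumes wo1: "Well_order (fst \<sigma>)" and wo2: "Well_order (fst (\<tau> :: ('i, 'a) bseq))"
  shows "set_option \<eta> \<subseteq> Field (fst \<tau>) \<Longrightarrow>
    run qt (seq_then \<sigma> \<tau>) f (map_option (emb \<circ> Inr) \<eta>) = run qt \<tau> (run qt \<sigma> f None) \<eta>"
proof (induction \<eta> rule: wf_induct_rule[OF wf_stage_rel[OF wo2], case_names less])
  case (less \<eta>)
  let ?R = "fst (seq_then \<sigma> \<tau>)" and ?P' = "preds (fst \<tau>) \<eta>" and ?\<eta> = "map_option (emb \<circ> Inr) \<eta>"
  have wo: "Well_order ?R" by (rule Well_order_seq_then[OF wo1 wo2])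
  have P: "preds ?R ?\<eta> = (emb \<circ> Inl) ` Field (fst \<sigma>) \<union> (emb \<circ> Inr) ` ?P'"
    using preds_seq_then[of \<sigma> \<tau> "map_option Inr \<eta>"] preds_sum_rel_right[OF less.prems]
    by (simp add: option.map_comp image_Un image_comp)
  show ?case
  proof (cases "?P' = {}")
    case True
    have "run qt (seq_then \<sigma> \<tau>) f ?\<eta> = run_step qt (seq_then \<sigma> \<tau>) f (run qt (seq_then \<sigma> \<tau>) f) ?\<eta>"
      by (rule run_unfold[OF wo])
    also have "\<dots> = run qt \<sigma> f None"
      by (rule run_step_seq_then_junction[OF wo1 wo2]) (use P True in simp)
    also have "\<dots> = run qt \<tau> (run qt \<sigma> f None) \<eta>"
      using True by (simp add: run_first[OF wo2])
    finally show ?thesis .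
  next
    case False
    have "run_step qt (seq_then \<sigma> \<tau>) f (run qt (seq_then \<sigma> \<tau>) f) ?\<eta> =
        run_step qt \<tau> (run qt \<sigma> f None) (run qt \<tau> (run qt \<sigma> f None)) \<eta>"
    proof (rule run_step_transport[OF cofinal_embedding_seq_then_right[OF wo1 wo2 P] wo2 False])
      show "?P' \<subseteq> Field (fst \<tau>)" by (rule preds_subset_Field)
      show "?P' \<noteq> {}" by (rule False)
      fix \<mu> assume \<mu>: "\<mu> \<in> ?P'"
      show "snd (seq_then \<sigma> \<tau>) ((emb \<circ> Inr) \<mu>) = snd \<tau> \<mu>" by simp
      show "run qt (seq_then \<sigma> \<tau>) f (Some ((emb \<circ> Inr) \<mu>)) = run qt \<tau> (run qt \<sigma> f None) (Some \<mu>)"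
        using less.IH[OF stage_rel_predsI[OF \<mu>]] \<mu> preds_subset_Field by fastforce
    qed
    then show ?thesis
      using run_unfold[OF wo, of qt f ?\<eta>] run_unfold[OF wo2, of qt "run qt \<sigma> f None" \<eta>]
      by (simp only:)
  qed
qed

lemma apply_seq_then:
  assumes "Well_order (fst \<sigma>)" "Well_order (fst (\<tau> :: ('i, 'a) bseq))"
  shows "apply_seq qt (seq_then \<sigma> \<tau>) f = apply_seq qt \<tau> (apply_seq qt \<sigma> f)"
  using run_seq_then_right[OF assms, of None] unfolding apply_seq_def by simp

end

section \<open>The exponent of the symmetric group on 24 letters\<close>

lemma perm_order:
  assumes "\<pi> permutes {..<24::nat}"
  shows "0 < perm_order \<pi>" "\<pi> ^^ perm_order \<pi> = id"
proof -
  have "permutation \<pi>" using assms permutation_permutes by blast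
  then obtain n where n: "\<pi> ^^ n = id" "n > 0" by (rule permutation_is_nilpotent)
  have "0 < perm_order \<pi> \<and> \<pi> ^^ perm_order \<pi> = id"
    unfolding perm_order_def by (rule LeastI[of _ n]) (use n in auto)
  then show "0 < perm_order \<pi>" "\<pi> ^^ perm_order \<pi> = id" by auto
qed

lemma S24_exponent_pos: "0 < S24_exponent"
proof -
  have "{perm_order \<pi> | \<pi>. \<pi> permutes {..<24::nat}} = perm_order ` {\<pi>. \<pi> permutes {..<24::nat}}"
    by blast
  then have "finite {perm_order \<pi> | \<pi>. \<pi> permutes {..<24::nat}}"
    using finite_permutations[of "{..<24::nat}"] by simp
  moreover have "0 \<notin> {perm_order \<pi> | \<pi>. \<pi> permutes {..<24::nat}}"
    using perm_order(1) by fastforce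
  ultimately have "S24_exponent \<noteq> 0" unfolding S24_exponent_def using Lcm_0_iff by blast
  then show ?thesis by simp
qed

lemma permutes_funpow_S24_exponent:
  assumes "\<pi> permutes {..<24::nat}"
  shows "\<pi> ^^ S24_exponent = id"
proof -
  have "perm_order \<pi> dvd S24_exponent"
    unfolding S24_exponent_def by (rule dvd_Lcm) (use assms in blast)
  then obtain k where k: "S24_exponent = perm_order \<pi> * k" by (rule dvdE)
  show ?thesis unfolding k funpow_mult[symmetric] perm_order(2)[OF assms] by simp
qed

text \<open>Transported along a bijection between A and an initial segment of the naturals,
  h becomes a permutation of at most 24 letters.\<close>

lemma funpow_S24_exponent_eq:
  fixes h :: "'c \<Rightarrow> 'c"
  assumes fin: "finite A" and card: "card A \<le> 24" and into: "h ` A \<subseteq> A" and inj: "inj_on h A"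
    and c: "c \<in> A"
  shows "(h ^^ S24_exponent) c = c"
proof -
  let ?n = "card A"
  obtain b where b: "bij_betw b A {..<?n}"
    using ex_bij_betw_finite_nat[OF fin] atLeast0LessThan by metis
  let ?b' = "inv_into A b"
  define \<pi> where "\<pi> m = (if m < ?n then b (h (?b' m)) else m)" for m
  have "bij_betw h A A" using inj endo_inj_surj[OF fin into inj] unfolding bij_betw_def by blast
  then have "bij_betw (b \<circ> h \<circ> ?b') {..<?n} {..<?n}"
    using b bij_betw_inv_into[OF b] by (blast intro: bij_betw_trans)
  then have "\<pi> permutes {..<?n}"
    by (intro bij_imp_permutes) (auto simp: \<pi>_def bij_betw_def inj_on_def image_def)
  then have "\<pi> permutes {..<24}" by (rule permutes_subset) (use card in auto)
  then have \<pi>_id: "\<pi> ^^ S24_exponent = id" by (rule permutes_funpow_S24_exponent)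
  have hA: "(h ^^ k) x \<in> A" if "x \<in> A" for k x
    using that into by (induction k) auto
  have conj: "(\<pi> ^^ k) (b x) = b ((h ^^ k) x)" if "x \<in> A" for k x
  proof (induction k)
    case 0
    then show ?case by simp
  next
    case (Suc k)
    have "b ((h ^^ k) x) < ?n" using b hA[OF that] unfolding bij_betw_def by auto
    then show ?case using Suc hA[OF that] b by (simp add: \<pi>_def bij_betw_inv_into_left)
  qed
  have "b ((h ^^ S24_exponent) c) = b c" using conj[OF c, of S24_exponent] \<pi>_id by simp
  then show ?thesis using b c hA[OF c] unfolding bij_betw_def inj_on_def by blast
qed

section \<open>The group UC\<close>

primrec seq_pow :: "('i, 'a) bseq \<Rightarrow> nat \<Rightarrow> ('i, 'a) bseq" where
  "seq_pow \<sigma> 0 = empty_seq"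
| "seq_pow \<sigma> (Suc n) = seq_then \<sigma> (seq_pow \<sigma> n)"

lemma is_bseq_empty_seq: "is_bseq empty_seq"
  by (simp add: is_bseq_def empty_seq_def)

lemma apply_seq_empty_seq: "apply_seq qt empty_seq f = f"
  unfolding apply_seq_def by (rule run_first) (simp_all add: empty_seq_def preds_None)

context cube_action
begin

definition seq_perm :: "('i, 'a) bseq \<Rightarrow> 'c \<Rightarrow> 'c" where
  "seq_perm sq c = the (apply_seq qt sq Some c)"

definition uc_class :: "('i, 'a) bseq \<Rightarrow> ('i, 'a) bseq set" where
  "uc_class \<sigma> = uc_rel qt cells `` {\<sigma>}"

lemma Well_order_uc: "sq \<in> uc qt cells \<Longrightarrow> Well_order (fst sq)"
  unfolding uc_def is_bseq_def by blast

lemma apply_seq_uc: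
  assumes sq: "sq \<in> uc qt cells" and c: "c \<in> cells"
  shows "apply_seq qt sq Some c = Some (seq_perm sq c)"
    and "reach qt (seq_perm sq c) c"
    and "apply_seq qt sq f c = f (seq_perm sq c)"
proof -
  have "apply_seq qt sq Some c \<noteq> None" using sq c unfolding uc_def legal_def by blast
  then show Some: "apply_seq qt sq Some c = Some (seq_perm sq c)" unfolding seq_perm_def by auto
  show "reach qt (seq_perm sq c) c" "apply_seq qt sq f c = f (seq_perm sq c)"
    using run_Some_source[OF Well_order_uc[OF sq] Some[unfolded apply_seq_def]]
    unfolding apply_seq_def by blast+
qed

lemma seq_perm_cells: "sq \<in> uc qt cells \<Longrightarrow> c \<in> cells \<Longrightarrow> seq_perm sq c \<in> cells"
  using apply_seq_uc(2) reach_sym reach_cells by metis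

lemma seq_perm_inj:
  "sq \<in> uc qt cells \<Longrightarrow> c \<in> cells \<Longrightarrow> d \<in> cells \<Longrightarrow> seq_perm sq c = seq_perm sq d \<Longrightarrow> c = d"
  using run_Some_inj[OF Well_order_uc] apply_seq_uc(1) unfolding apply_seq_def by metis

text \<open>Two colours suffice to tell cells apart.\<close>

lemma seq_equiv_iff:
  assumes "\<sigma> \<in> uc qt cells" "\<sigma>' \<in> uc qt cells"
  shows "seq_equiv qt cells \<sigma> \<sigma>' \<longleftrightarrow> (\<forall>c\<in>cells. seq_perm \<sigma> c = seq_perm \<sigma>' c)"
proof
  assume equiv: "seq_equiv qt cells \<sigma> \<sigma>'"
  show "\<forall>c\<in>cells. seq_perm \<sigma> c = seq_perm \<sigma>' c"
  proof
    fix c assume c: "c \<in> cells"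
    let ?f = "\<lambda>d. if d = seq_perm \<sigma> c then Some Red else Some White"
    have "apply_seq qt \<sigma> ?f c = apply_seq qt \<sigma>' ?f c" using equiv c unfolding seq_equiv_def by blast
    then have "?f (seq_perm \<sigma> c) = ?f (seq_perm \<sigma>' c)"
      by (simp only: apply_seq_uc(3)[OF assms(1) c] apply_seq_uc(3)[OF assms(2) c])
    then show "seq_perm \<sigma> c = seq_perm \<sigma>' c" by (simp split: if_splits)
  qed
next
  assume eq: "\<forall>c\<in>cells. seq_perm \<sigma> c = seq_perm \<sigma>' c"
  show "seq_equiv qt cells \<sigma> \<sigma>'"
    unfolding seq_equiv_def
  proof (intro allI ballI)
    fix f :: "'c \<Rightarrow> color option" and c assume "c \<in> cells"
    then show "apply_seq qt \<sigma> f c = apply_seq qt \<sigma>' f c"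
      using eq by (simp add: apply_seq_uc(3)[OF assms(1)] apply_seq_uc(3)[OF assms(2)])
  qed
qed

lemma empty_seq_uc: "empty_seq \<in> uc qt cells"
  unfolding uc_def legal_def by (simp add: is_bseq_empty_seq apply_seq_empty_seq)

lemma seq_perm_empty_seq: "seq_perm empty_seq c = c"
  unfolding seq_perm_def by (simp add: apply_seq_empty_seq)

lemma seq_perm_funpow_S24_exponent:
  assumes sq: "sq \<in> uc qt cells" and c: "c \<in> cells"
  shows "(seq_perm sq ^^ S24_exponent) c = c"
proof (rule funpow_S24_exponent_eq[OF finite_orbit card_orbit])
  have orbit: "{d. reach qt c d} \<subseteq> cells" using reach_cells c by blast
  show "seq_perm sq ` {d. reach qt c d} \<subseteq> {d. reach qt c d}"
  proof clarify
    fix d assume "reach qt c d"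
    moreover have "reach qt d (seq_perm sq d)"
      using reach_sym[OF apply_seq_uc(2)[OF sq]] orbit \<open>reach qt c d\<close> by blast
    ultimately show "reach qt c (seq_perm sq d)" by (rule reach_trans[rotated])
  qed
  show "inj_on (seq_perm sq) {d. reach qt c d}"
    using orbit seq_perm_inj[OF sq] by (intro inj_onI) blast
  show "c \<in> {d. reach qt c d}" by (simp add: reach_refl)
qed

lemma uc_class_eq:
  assumes "\<sigma> \<in> uc qt cells"
  shows "uc_class \<sigma> = {\<rho> \<in> uc qt cells. \<forall>c\<in>cells. seq_perm \<rho> c = seq_perm \<sigma> c}"
  using assms seq_equiv_iff[OF assms] unfolding uc_class_def uc_rel_def by auto

lemma uc_class_eq_iff:
  assumes "\<sigma> \<in> uc qt cells" "\<sigma>' \<in> uc qt cells"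
  shows "uc_class \<sigma> = uc_class \<sigma>' \<longleftrightarrow> (\<forall>c\<in>cells. seq_perm \<sigma> c = seq_perm \<sigma>' c)"
  using assms by (auto simp: uc_class_eq)

lemma uc_class_self: "\<sigma> \<in> uc qt cells \<Longrightarrow> \<sigma> \<in> uc_class \<sigma>"
  by (simp add: uc_class_eq)

lemma carrier_UC: "carrier (UC qt cells) = uc_class ` uc qt cells"
  unfolding UC_def quotient_def uc_class_def by auto

lemma carrier_UC_memD:
  assumes "X \<in> carrier (UC qt cells)" "\<sigma> \<in> X"
  shows "\<sigma> \<in> uc qt cells" "X = uc_class \<sigma>"
  using assms unfolding carrier_UC by (auto simp: uc_class_eq)

lemma one_UC: "\<one>\<^bsub>UC qt cells\<^esub> = uc_class empty_seq"
  using seq_equiv_iff[OF _ empty_seq_uc] unfolding UC_def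
  by (auto simp: uc_class_eq[OF empty_seq_uc])

context
  assumes inj_emb: "inj (emb :: 'i + 'i \<Rightarrow> 'i)"
begin

lemma seq_then_uc:
  assumes \<sigma>: "\<sigma> \<in> uc qt cells" and \<tau>: "(\<tau> :: ('i, 'a) bseq) \<in> uc qt cells"
  shows "seq_then \<sigma> \<tau> \<in> uc qt cells"
    and "c \<in> cells \<Longrightarrow> seq_perm (seq_then \<sigma> \<tau>) c = seq_perm \<sigma> (seq_perm \<tau> c)"
proof -
  have Some: "apply_seq qt (seq_then \<sigma> \<tau>) Some c = Some (seq_perm \<sigma> (seq_perm \<tau> c))"
    if c: "c \<in> cells" for c
  proof -
    have "apply_seq qt (seq_then \<sigma> \<tau>) Some c = apply_seq qt \<tau> (apply_seq qt \<sigma> Some) c"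
      by (simp only: apply_seq_then[OF inj_emb Well_order_uc[OF \<sigma>] Well_order_uc[OF \<tau>]])
    also have "\<dots> = apply_seq qt \<sigma> Some (seq_perm \<tau> c)" by (rule apply_seq_uc(3)[OF \<tau> c])
    also have "\<dots> = Some (seq_perm \<sigma> (seq_perm \<tau> c))"
      by (rule apply_seq_uc(1)[OF \<sigma> seq_perm_cells[OF \<tau> c]])
    finally show ?thesis .
  qed
  moreover have "is_bseq (seq_then \<sigma> \<tau>)"
    using \<sigma> \<tau> unfolding uc_def by (blast intro: is_bseq_seq_then[OF inj_emb])
  ultimately show uc: "seq_then \<sigma> \<tau> \<in> uc qt cells" unfolding uc_def legal_def by simp
  show "c \<in> cells \<Longrightarrow> seq_perm (seq_then \<sigma> \<tau>) c = seq_perm \<sigma> (seq_perm \<tau> c)"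
    using Some apply_seq_uc(1)[OF uc] by simp
qed

lemma seq_pow_uc:
  assumes "(\<sigma> :: ('i, 'a) bseq) \<in> uc qt cells"
  shows "seq_pow \<sigma> n \<in> uc qt cells \<and> (\<forall>c\<in>cells. seq_perm (seq_pow \<sigma> n) c = (seq_perm \<sigma> ^^ n) c)"
  by (induction n) (simp_all add: empty_seq_uc seq_perm_empty_seq seq_then_uc[OF assms])

lemma finite_Field_seq_pow:
  "finite (Field (fst \<sigma>)) \<Longrightarrow> finite (Field (fst (seq_pow (\<sigma> :: ('i, 'a) bseq) n)))"
  by (induction n) (simp_all add: empty_seq_def finite_Field_seq_then[OF inj_emb])

lemma seq_pow_S24_exponent:
  assumes "(\<sigma> :: ('i, 'a) bseq) \<in> uc qt cells"
  shows "uc_class (seq_pow \<sigma> S24_exponent) = uc_class empty_seq"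
  using seq_pow_uc[OF assms] seq_perm_funpow_S24_exponent[OF assms]
  by (simp add: uc_class_eq_iff empty_seq_uc seq_perm_empty_seq)

lemma mult_uc_class:
  assumes \<sigma>: "\<sigma> \<in> uc qt cells" and \<tau>: "(\<tau> :: ('i, 'a) bseq) \<in> uc qt cells"
  shows "uc_class \<tau> \<otimes>\<^bsub>UC qt cells\<^esub> uc_class \<sigma> = uc_class (seq_then \<sigma> \<tau>)"
proof -
  have "\<rho> \<in> uc_class (seq_then \<sigma> \<tau>)"
    if \<rho>: "\<rho> \<in> uc qt cells" "\<tau>' \<in> uc_class \<tau>" "\<sigma>' \<in> uc_class \<sigma>"
      "seq_equiv qt cells \<rho> (seq_then \<sigma>' \<tau>')"
    for \<rho> \<sigma>' \<tau>'
  proof -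
    have \<tau>': "\<tau>' \<in> uc qt cells" "\<forall>c\<in>cells. seq_perm \<tau>' c = seq_perm \<tau> c"
      using \<rho>(2) uc_class_eq[OF \<tau>] by auto
    have \<sigma>': "\<sigma>' \<in> uc qt cells" "\<forall>c\<in>cells. seq_perm \<sigma>' c = seq_perm \<sigma> c"
      using \<rho>(3) uc_class_eq[OF \<sigma>] by auto
    have "\<forall>c\<in>cells. seq_perm \<rho> c = seq_perm (seq_then \<sigma>' \<tau>') c"
      using \<rho>(4) seq_equiv_iff[OF \<rho>(1) seq_then_uc(1)[OF \<sigma>'(1) \<tau>'(1)]] by simp
    then show ?thesis
      using \<rho>(1) \<sigma>' \<tau>' seq_perm_cells[OF \<tau>]
      by (simp add: uc_class_eq seq_then_uc[OF \<sigma> \<tau>] seq_then_uc(2)[OF \<sigma>'(1) \<tau>'(1)])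
  qed
  moreover have "\<rho> \<in> uc qt cells \<and> seq_equiv qt cells \<rho> (seq_then \<sigma> \<tau>)"
    if "\<rho> \<in> uc_class (seq_then \<sigma> \<tau>)" for \<rho>
    using that seq_equiv_iff[OF _ seq_then_uc(1)[OF \<sigma> \<tau>]]
    by (simp add: uc_class_eq[OF seq_then_uc(1)[OF \<sigma> \<tau>]])
  ultimately have "{\<rho> \<in> uc qt cells. \<exists>\<tau>'\<in>uc_class \<tau>. \<exists>\<sigma>'\<in>uc_class \<sigma>.
      seq_equiv qt cells \<rho> (seq_then \<sigma>' \<tau>')} = uc_class (seq_then \<sigma> \<tau>)"
    using uc_class_self[OF \<sigma>] uc_class_self[OF \<tau>] by blast
  then show ?thesis unfolding UC_def by simp
qed

lemma pow_uc_class: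
  assumes "(\<sigma> :: ('i, 'a) bseq) \<in> uc qt cells"
  shows "uc_class \<sigma> [^]\<^bsub>UC qt cells\<^esub> n = uc_class (seq_pow \<sigma> n)"
  by (induction n) (simp_all add: one_UC mult_uc_class assms seq_pow_uc)

lemma seq_pow_pred_mult_one:
  assumes "(\<sigma> :: ('i, 'a) bseq) \<in> uc qt cells"
  shows "uc_class (seq_pow \<sigma> (S24_exponent - 1)) \<otimes>\<^bsub>UC qt cells\<^esub> uc_class \<sigma> = \<one>\<^bsub>UC qt cells\<^esub>"
  using assms S24_exponent_pos seq_pow_S24_exponent[OF assms]
  by (simp add: mult_uc_class seq_pow_uc one_UC flip: seq_pow.simps(2))

lemma group_UC: "group (UC qt cells :: ('i, 'a) bseq set monoid)"
proof (rule groupI)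
  let ?G = "UC qt cells :: ('i, 'a) bseq set monoid"
  show "\<one>\<^bsub>?G\<^esub> \<in> carrier ?G" by (simp add: one_UC carrier_UC empty_seq_uc)
  fix X Y Z assume "X \<in> carrier ?G" "Y \<in> carrier ?G" "Z \<in> carrier ?G"
  then obtain \<sigma> \<tau> \<rho> where \<sigma>: "\<sigma> \<in> uc qt cells" "X = uc_class \<sigma>"
    and \<tau>: "\<tau> \<in> uc qt cells" "Y = uc_class \<tau>" and \<rho>: "\<rho> \<in> uc qt cells" "Z = uc_class \<rho>"
    unfolding carrier_UC by blast
  show "X \<otimes>\<^bsub>?G\<^esub> Y \<in> carrier ?G"
    using \<sigma> \<tau> by (simp add: mult_uc_class carrier_UC seq_then_uc)
  have "uc_class (seq_then \<rho> (seq_then \<tau> \<sigma>)) = uc_class (seq_then (seq_then \<rho> \<tau>) \<sigma>)"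
    using \<sigma> \<tau> \<rho> seq_perm_cells[OF \<rho>(1)]
    by (simp add: uc_class_eq_iff seq_then_uc seq_perm_cells)
  then show "X \<otimes>\<^bsub>?G\<^esub> Y \<otimes>\<^bsub>?G\<^esub> Z = X \<otimes>\<^bsub>?G\<^esub> (Y \<otimes>\<^bsub>?G\<^esub> Z)"
    using \<sigma> \<tau> \<rho> by (simp add: mult_uc_class seq_then_uc)
  show "\<one>\<^bsub>?G\<^esub> \<otimes>\<^bsub>?G\<^esub> X = X"
    using \<sigma> by (simp add: one_UC mult_uc_class empty_seq_uc uc_class_eq_iff seq_then_uc
        seq_perm_empty_seq)
  have "uc_class (seq_pow \<sigma> (S24_exponent - 1)) \<otimes>\<^bsub>?G\<^esub> X = \<one>\<^bsub>?G\<^esub>"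
    using seq_pow_pred_mult_one[OF \<sigma>(1)] \<sigma>(2) by simp
  then show "\<exists>Y\<in>carrier ?G. Y \<otimes>\<^bsub>?G\<^esub> X = \<one>\<^bsub>?G\<^esub>"
    using seq_pow_uc[OF \<sigma>(1)] unfolding carrier_UC by blast
qed

lemma inv_uc_class:
  assumes "(\<sigma> :: ('i, 'a) bseq) \<in> uc qt cells"
  shows "inv\<^bsub>UC qt cells\<^esub> uc_class \<sigma> = uc_class (seq_pow \<sigma> (S24_exponent - 1))"
  using group.inv_equality[OF group_UC seq_pow_pred_mult_one[OF assms]] assms
    seq_pow_uc[OF assms] by (simp add: carrier_UC)

lemma GL_in_UC_iff:
  "X \<in> GL_in_UC qt cells \<longleftrightarrow>
    (\<exists>\<sigma> :: ('i, 'a) bseq. \<sigma> \<in> uc qt cells \<and> finite (Field (fst \<sigma>)) \<and> X = uc_class \<sigma>)"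
proof
  assume "X \<in> GL_in_UC qt cells"
  then obtain \<sigma> where "X \<in> carrier (UC qt cells)" "\<sigma> \<in> X" "finite (Field (fst \<sigma>))"
    unfolding GL_in_UC_def by blast
  then show "\<exists>\<sigma>. \<sigma> \<in> uc qt cells \<and> finite (Field (fst \<sigma>)) \<and> X = uc_class \<sigma>"
    using carrier_UC_memD by blast
next
  assume "\<exists>\<sigma> :: ('i, 'a) bseq. \<sigma> \<in> uc qt cells \<and> finite (Field (fst \<sigma>)) \<and> X = uc_class \<sigma>"
  then show "X \<in> GL_in_UC qt cells"
    unfolding GL_in_UC_def carrier_UC using uc_class_self by blast
qed

lemma subgroup_GL_in_UC: "subgroup (GL_in_UC qt cells) (UC qt cells :: ('i, 'a) bseq set monoid)"
proof (rule group.subgroupI[OF group_UC])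
  let ?G = "UC qt cells :: ('i, 'a) bseq set monoid"
    and ?GL = "GL_in_UC qt cells :: ('i, 'a) bseq set set"
  show "?GL \<subseteq> carrier ?G" unfolding GL_in_UC_def by blast
  have "uc_class empty_seq \<in> ?GL"
    unfolding GL_in_UC_iff using empty_seq_uc
    by (intro exI[of _ empty_seq]) (simp add: empty_seq_def)
  then show "?GL \<noteq> {}" by blast
  fix X Y assume "X \<in> ?GL" "Y \<in> ?GL"
  then obtain \<sigma> \<tau> :: "('i, 'a) bseq"
    where \<sigma>: "\<sigma> \<in> uc qt cells" "finite (Field (fst \<sigma>))" "X = uc_class \<sigma>"
      and \<tau>: "\<tau> \<in> uc qt cells" "finite (Field (fst \<tau>))" "Y = uc_class \<tau>"
    unfolding GL_in_UC_iff by blast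
  show "inv\<^bsub>?G\<^esub> X \<in> ?GL"
    unfolding GL_in_UC_iff \<sigma>(3) inv_uc_class[OF \<sigma>(1)]
    by (intro exI[of _ "seq_pow \<sigma> (S24_exponent - 1)"])
      (simp add: seq_pow_uc[OF \<sigma>(1)] finite_Field_seq_pow[OF \<sigma>(2)])
  show "X \<otimes>\<^bsub>?G\<^esub> Y \<in> ?GL"
    unfolding GL_in_UC_iff \<sigma>(3) \<tau>(3) mult_uc_class[OF \<tau>(1) \<sigma>(1)]
    by (intro exI[of _ "seq_then \<tau> \<sigma>"])
      (simp add: seq_then_uc(1)[OF \<tau>(1) \<sigma>(1)] finite_Field_seq_then[OF inj_emb \<tau>(2) \<sigma>(2)])
qed

lemma ord_UC_bounds:
  assumes X: "X \<in> carrier (UC qt cells :: ('i, 'a) bseq set monoid)"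
  shows "0 < group.ord (UC qt cells) X \<and> group.ord (UC qt cells) X \<le> S24_exponent"
proof -
  obtain \<sigma> :: "('i, 'a) bseq" where \<sigma>: "\<sigma> \<in> uc qt cells" "X = uc_class \<sigma>"
    using X unfolding carrier_UC by blast
  then have "X [^]\<^bsub>UC qt cells\<^esub> S24_exponent = \<one>\<^bsub>UC qt cells\<^esub>"
    by (simp add: pow_uc_class seq_pow_S24_exponent one_UC)
  then have "group.ord (UC qt cells) X dvd S24_exponent"
    using group.pow_eq_id[OF group_UC X] by simp
  then show ?thesis
    using S24_exponent_pos dvd_imp_le by (cases "group.ord (UC qt cells) X") auto
qed

lemma seq_equiv_seq_then:
  assumes "\<sigma> \<in> uc qt cells" "\<sigma>' \<in> uc qt cells"
    and "(\<tau> :: ('i, 'a) bseq) \<in> uc qt cells" "\<tau>' \<in> uc qt cells"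
    and "seq_equiv qt cells \<sigma> \<sigma>'" "seq_equiv qt cells \<tau> \<tau>'"
  shows "seq_equiv qt cells (seq_then \<sigma> \<tau>) (seq_then \<sigma>' \<tau>')"
  using assms seq_perm_cells[OF assms(3)]
  by (simp add: seq_equiv_iff seq_then_uc)

lemma UC_claim_holds: "UC_claim qt cells TYPE('i)"
  by (simp add: UC_claim_def group_UC subgroup_GL_in_UC seq_then_uc(1) seq_equiv_seq_then
      ord_UC_bounds)

end

end

section \<open>The rotation group of the cube\<close>

text \<open>A rotation is a signed permutation matrix stored row by row: row i is (j, s) when the
  i-th coordinate of the image is the j-th coordinate of the argument, negated if s.\<close>

type_synonym rot = "(axis \<times> bool) \<times> (axis \<times> bool) \<times> (axis \<times> bool)"

definition sign_ext :: "bool \<Rightarrow> 'a ext \<Rightarrow> 'a ext" where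
  "sign_ext s v = (if s then eneg v else v)"

fun rot_row :: "rot \<Rightarrow> axis \<Rightarrow> axis \<times> bool" where
  "rot_row (r1, r2, r3) AX = r1"
| "rot_row (r1, r2, r3) AY = r2"
| "rot_row (r1, r2, r3) AZ = r3"

definition rot_pt :: "rot \<Rightarrow> 'a point \<Rightarrow> 'a point" where
  "rot_pt R p =
    (sign_ext (snd (rot_row R AX)) (coord p (fst (rot_row R AX))),
     sign_ext (snd (rot_row R AY)) (coord p (fst (rot_row R AY))),
     sign_ext (snd (rot_row R AZ)) (coord p (fst (rot_row R AZ))))"

definition rot_axis :: "rot \<Rightarrow> axis \<Rightarrow> axis" where
  "rot_axis R j =
    (if fst (rot_row R AX) = j then AX else if fst (rot_row R AY) = j then AY else AZ)"

definition rot_edged :: "rot \<Rightarrow> 'a point \<times> axis \<Rightarrow> 'a point \<times> axis" where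
  "rot_edged R c = (rot_pt R (fst c), rot_axis R (snd c))"

definition rot_comp_row :: "rot \<Rightarrow> rot \<Rightarrow> axis \<Rightarrow> axis \<times> bool" where
  "rot_comp_row G R i =
    (fst (rot_row R (fst (rot_row G i))), snd (rot_row G i) \<noteq> snd (rot_row R (fst (rot_row G i))))"

definition rot_comp :: "rot \<Rightarrow> rot \<Rightarrow> rot" where
  "rot_comp G R = (rot_comp_row G R AX, rot_comp_row G R AY, rot_comp_row G R AZ)"

abbreviation rot_id :: rot where
  "rot_id \<equiv> ((AX, False), (AY, False), (AZ, False))"

fun quarter_rot :: "axis \<Rightarrow> rot" where
  "quarter_rot AX = ((AX, False), (AZ, True), (AY, False))"
| "quarter_rot AY = ((AZ, False), (AY, False), (AX, True))"
| "quarter_rot AZ = ((AY, True), (AX, False), (AZ, False))"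

definition cube_rots :: "rot list" where
  "cube_rots = [
    ((AX,False),(AY,False),(AZ,False)), ((AX,False),(AY,True),(AZ,True)),
    ((AX,True),(AY,False),(AZ,True)), ((AX,True),(AY,True),(AZ,False)),
    ((AX,False),(AZ,False),(AY,True)), ((AX,False),(AZ,True),(AY,False)),
    ((AX,True),(AZ,False),(AY,False)), ((AX,True),(AZ,True),(AY,True)),
    ((AY,False),(AX,False),(AZ,True)), ((AY,False),(AX,True),(AZ,False)),
    ((AY,True),(AX,False),(AZ,False)), ((AY,True),(AX,True),(AZ,True)),
    ((AY,False),(AZ,False),(AX,False)), ((AY,False),(AZ,True),(AX,True)),
    ((AY,True),(AZ,False),(AX,True)), ((AY,True),(AZ,True),(AX,False)),
    ((AZ,False),(AX,False),(AY,False)), ((AZ,False),(AX,True),(AY,True)),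
    ((AZ,True),(AX,False),(AY,True)), ((AZ,True),(AX,True),(AY,False)),
    ((AZ,False),(AY,False),(AX,True)), ((AZ,False),(AY,True),(AX,False)),
    ((AZ,True),(AY,False),(AX,False)), ((AZ,True),(AY,True),(AX,True))]"

lemma length_cube_rots: "length cube_rots = 24"
  by (simp add: cube_rots_def)

lemma rot_comp_quarter_rot_in_cube_rots:
  "\<forall>R\<in>set cube_rots. rot_comp (quarter_rot i) R \<in> set cube_rots"
  by (cases i) (simp_all add: cube_rots_def rot_comp_def rot_comp_row_def)

lemma eneg_eneg [simp]: "eneg (eneg a) = a"
  by (cases a) auto

lemma coord_rot_pt:
  "coord (rot_pt R p) i = sign_ext (snd (rot_row R i)) (coord p (fst (rot_row R i)))"
  unfolding rot_pt_def by (cases i) simp_all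

lemma point_eqI:
  "coord p AX = coord q AX \<Longrightarrow> coord p AY = coord q AY \<Longrightarrow> coord p AZ = coord q AZ \<Longrightarrow> p = q"
  by (cases p; cases q) simp

lemma rot_pt_comp: "rot_pt (rot_comp G R) p = rot_pt G (rot_pt R p)"
  by (intro point_eqI) (simp_all add: coord_rot_pt rot_comp_def rot_comp_row_def sign_ext_def)

lemma rot_axis_comp_quarter_rot:
  "\<forall>R\<in>set cube_rots.
    rot_axis (rot_comp (quarter_rot i) R) j = rot_axis (quarter_rot i) (rot_axis R j)"
  by (cases i; cases j) (simp_all add: cube_rots_def rot_comp_def rot_comp_row_def rot_axis_def)

lemma rot_edged_comp:
  "R \<in> set cube_rots \<Longrightarrow>
    rot_edged (rot_comp (quarter_rot i) R) c = rot_edged (quarter_rot i) (rot_edged R c)"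
  using rot_axis_comp_quarter_rot by (simp add: rot_edged_def rot_pt_comp)

lemma rot_pt_id: "rot_pt rot_id p = p"
  by (cases p) (simp add: rot_pt_def sign_ext_def)

lemma rot_edged_id: "rot_edged rot_id c = c"
  by (cases c; cases "snd c") (auto simp: rot_edged_def rot_pt_id rot_axis_def)

lemma qturn_pt_cases: "qturn_pt i \<alpha> p = p \<or> qturn_pt i \<alpha> p = rot_pt (quarter_rot i) p"
  by (cases i; cases p) (auto simp: rot_pt_def sign_ext_def)

lemma qturn_edged_cases: "qturn_edged i \<alpha> c = c \<or> qturn_edged i \<alpha> c = rot_edged (quarter_rot i) c"
proof -
  obtain p j where c: "c = (p, j)" by (cases c)
  have "carry_axis i j = rot_axis (quarter_rot i) j"
    by (cases i; cases j) (simp_all add: rot_axis_def)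
  moreover have "coord p i = \<alpha> \<Longrightarrow> qturn_pt i \<alpha> p = rot_pt (quarter_rot i) p"
    by (cases i; cases p) (auto simp: rot_pt_def sign_ext_def)
  ultimately show ?thesis unfolding qturn_edged_def c rot_edged_def by auto
qed

text \<open>Every quarter-turn acts on a cell either trivially or as the corresponding rotation, so
  the orbit of a cell lies in its orbit under the 24 rotations.\<close>

lemma finite_card_orbit_le_24:
  fixes qt :: "axis \<Rightarrow> 'a ext \<Rightarrow> 'c \<Rightarrow> 'c" and rot :: "rot \<Rightarrow> 'c \<Rightarrow> 'c"
  assumes qt_cases: "\<And>i \<alpha> x. qt i \<alpha> x = x \<or> qt i \<alpha> x = rot (quarter_rot i) x"
    and rot_comp: "\<And>R i x. R \<in> set cube_rots \<Longrightarrow>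
      rot (rot_comp (quarter_rot i) R) x = rot (quarter_rot i) (rot R x)"
    and rot_id: "\<And>x. rot rot_id x = x"
  shows "finite {d. reach qt c d}" "card {d. reach qt c d} \<le> 24"
proof -
  have "d \<in> (\<lambda>R. rot R c) ` set cube_rots" if "reach qt c d" for d
    using that
  proof (induction rule: reach.induct)
    case (reach_refl c)
    show ?case using rot_id[of c] by (force simp: cube_rots_def)
  next
    case (reach_step c d i \<alpha>)
    then obtain R where R: "R \<in> set cube_rots" "d = rot R c" by blast
    then have "rot (quarter_rot i) d \<in> (\<lambda>R. rot R c) ` set cube_rots"
      using rot_comp[OF R(1)] rot_comp_quarter_rot_in_cube_rots R(1) by (metis image_eqI)
    then show ?case using qt_cases[of i \<alpha> d] reach_step.IH by metis
  qed
  then have sub: "{d. reach qt c d} \<subseteq> (\<lambda>R. rot R c) ` set cube_rots" by blast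
  then show "finite {d. reach qt c d}" by (rule finite_subset) simp
  have "card {d. reach qt c d} \<le> card ((\<lambda>R. rot R c) ` set cube_rots)"
    using sub by (rule card_mono[rotated]) simp
  also have "\<dots> \<le> length cube_rots" using card_image_le card_length le_trans by blast
  finally show "card {d. reach qt c d} \<le> 24" by (simp add: length_cube_rots)
qed

lemma card_axis_set: "card {i :: axis. P i} = of_bool (P AX) + of_bool (P AY) + of_bool (P AZ)"
proof -
  let ?S = "\<lambda>i. if P i then {i} else {}"
  have "{i. P i} = ?S AX \<union> ?S AY \<union> ?S AZ"
  proof (rule Set.set_eqI)
    fix i show "i \<in> {i. P i} \<longleftrightarrow> i \<in> ?S AX \<union> ?S AY \<union> ?S AZ" by (cases i) auto
  qed
  then show ?thesis by (cases "P AX"; cases "P AY"; cases "P AZ") simp_all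
qed

lemma is_inf_eneg [simp]: "is_inf (eneg a) = is_inf a"
  unfolding is_inf_def by (cases a) auto

lemma cube_action_qturn_pt:
  "cube_action (qturn_pt :: axis \<Rightarrow> 'a ext \<Rightarrow> 'a point \<Rightarrow> 'a point) edgeless_cells"
proof
  fix i :: axis and \<alpha> :: "'a ext" and x :: "'a point"
  show "(qturn_pt i \<alpha> ^^ 4) x = x"
    by (cases i; cases x) (simp_all add: numeral_eq_Suc)
  show "x \<in> edgeless_cells \<Longrightarrow> qturn_pt i \<alpha> x \<in> edgeless_cells"
    by (cases i; cases x) (auto simp: edgeless_cells_def card_axis_set)
next
  fix c :: "'a point"
  show "finite {d. reach qturn_pt c d}" "card {d. reach qturn_pt c d} \<le> 24"
    using finite_card_orbit_le_24[where qt = qturn_pt and rot = rot_pt,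
        OF qturn_pt_cases rot_pt_comp rot_pt_id]
    by blast+
qed

lemma cube_action_qturn_edged:
  "cube_action (qturn_edged :: axis \<Rightarrow> 'a ext \<Rightarrow> 'a point \<times> axis \<Rightarrow> 'a point \<times> axis) edged_cells"
proof
  fix i :: axis and \<alpha> :: "'a ext" and x :: "'a point \<times> axis"
  obtain a b c j where x: "x = ((a, b, c), j)" by (cases x) auto
  show "(qturn_edged i \<alpha> ^^ 4) x = x"
    unfolding x by (cases i; cases j) (simp_all add: numeral_eq_Suc qturn_edged_def)
  show "x \<in> edged_cells \<Longrightarrow> qturn_edged i \<alpha> x \<in> edged_cells"
    unfolding x by (cases i; cases j) (auto simp: edged_cells_def qturn_edged_def)
next
  fix c :: "'a point \<times> axis"
  show "finite {d. reach qturn_edged c d}" "card {d. reach qturn_edged c d} \<le> 24"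
    using finite_card_orbit_le_24[where qt = qturn_edged and rot = rot_edged,
        OF qturn_edged_cases rot_edged_comp rot_edged_id]
    by blast+
qed

lemma inj_emb_if_infinite:
  includes cardinal_syntax
  assumes "infinite (UNIV :: 'i set)"
  shows "inj (emb :: 'i + 'i \<Rightarrow> 'i)"
proof -
  have "|(UNIV :: 'i set) <+> (UNIV :: 'i set)| =o |UNIV :: 'i set|"
    by (rule card_of_Plus_infinite1[OF assms]) (simp add: card_of_mono1)
  then have "|(UNIV :: 'i set) <+> (UNIV :: 'i set)| \<le>o |UNIV :: 'i set|"
    using ordIso_iff_ordLeq by blast
  then obtain h :: "'i + 'i \<Rightarrow> 'i" where "inj h"
    using card_of_ordLeq[of "UNIV :: ('i + 'i) set" "UNIV :: 'i set"] by auto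
  then show ?thesis unfolding emb_def by (rule someI[where P = inj])
qed

theorem lemma3p8:
  assumes "infinite (UNIV :: 'a set)"
      and "infinite (UNIV :: 'i set)"
  shows "UC_claim (qturn_pt :: axis \<Rightarrow> 'a ext \<Rightarrow> 'a point \<Rightarrow> 'a point) edgeless_cells TYPE('i)
       \<and> UC_claim (qturn_edged :: axis \<Rightarrow> 'a ext \<Rightarrow> 'a point \<times> axis \<Rightarrow> 'a point \<times> axis) edged_cells TYPE('i)"
  using cube_action.UC_claim_holds[OF cube_action_qturn_pt inj_emb_if_infinite[OF assms(2)]]
    cube_action.UC_claim_holds[OF cube_action_qturn_edged inj_emb_if_infinite[OF assms(2)]] by blast

end
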